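(* Let $a\in BC(\mathbf{R})$, $a\ge0$, with $a(x)\ge\varepsilon_1>0$ for $|x|\ge L$ ($L>0$), and let $V\in BC^1(\mathbf{R})$ with $V>0$ and $V'(x)x\le0$ on $\mathbf{R}$. There is a constant $C^*>0$ depending only on $L$ such that if $V(0)<1/(4C^* )$, then there exists $C>0$ such that for every $[u_0,u_1]\in C_0^\infty(\mathbf{R})\times C_0^\infty(\mathbf{R})$ the corresponding smooth solution $u$ of $u_{tt}-u_{xx}+V(x)u+a(x)u_t=0$, $u(0)=u_0$, $u_t(0)=u_1$ satisfies \[(1+t)\int_{|x|\le L}|u(t,x)|^2dx\le C I_0^2\quad(t\ge0),\] where $I_0^2:=\|u_0\|_{H^1}^2+\|u_1\|^2+\big\|\frac{u_1+a(\cdot)u_0}{\sqrt{V(\cdot)}}\big\|^2$.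
   Context: $\|\cdot\|$ is the $L^2(\mathbf{R})$-norm. *)

theory Defs
  imports "HOL-Analysis.Analysis"
begin

definition BC :: "(real \<Rightarrow> real) \<Rightarrow> bool" where
  "BC f \<longleftrightarrow> continuous_on UNIV f \<and> bounded (range f)"

definition BC1 :: "(real \<Rightarrow> real) \<Rightarrow> bool" where
  "BC1 f \<longleftrightarrow> BC f \<and> (\<forall>x. f differentiable (at x)) \<and> BC (deriv f)"

definition C0_inf :: "(real \<Rightarrow> real) \<Rightarrow> bool" where
  "C0_inf f \<longleftrightarrow> (\<forall>n x. ((deriv ^^ n) f) differentiable (at x))
                 \<and> bounded {x. f x \<noteq> 0}"

definition is_solution ::
  "(real \<Rightarrow> real) \<Rightarrow> (real \<Rightarrow> real) \<Rightarrow> (real \<Rightarrow> real) \<Rightarrow> (real \<Rightarrow> real)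
   \<Rightarrow> (real \<Rightarrow> real \<Rightarrow> real) \<Rightarrow> bool" where
  "is_solution a V u0 u1 u \<longleftrightarrow>
    (\<exists>ut ux utt utx uxx :: real \<Rightarrow> real \<Rightarrow> real.
      (\<forall>t\<ge>0. \<forall>x.
         ((\<lambda>s. u s x) has_real_derivative ut t x) (at t within {0..}) \<and>
         ((\<lambda>y. u t y) has_real_derivative ux t x) (at x) \<and>
         ((\<lambda>s. ut s x) has_real_derivative utt t x) (at t within {0..}) \<and>
         ((\<lambda>y. ut t y) has_real_derivative utx t x) (at x) \<and>
         ((\<lambda>y. ux t y) has_real_derivative uxx t x) (at x) \<and>
         utt t x - uxx t x + V x * u t x + a x * ut t x = 0) \<and>
      continuous_on ({0..} \<times> UNIV) (\<lambda>(t,x). u t x) \<and>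
      continuous_on ({0..} \<times> UNIV) (\<lambda>(t,x). ut t x) \<and>
      continuous_on ({0..} \<times> UNIV) (\<lambda>(t,x). ux t x) \<and>
      continuous_on ({0..} \<times> UNIV) (\<lambda>(t,x). utt t x) \<and>
      continuous_on ({0..} \<times> UNIV) (\<lambda>(t,x). utx t x) \<and>
      continuous_on ({0..} \<times> UNIV) (\<lambda>(t,x). uxx t x) \<and>
      (\<forall>x. u 0 x = u0 x) \<and> (\<forall>x. ut 0 x = u1 x))"

definition I0sq :: "(real \<Rightarrow> real) \<Rightarrow> (real \<Rightarrow> real) \<Rightarrow> (real \<Rightarrow> real) \<Rightarrow> (real \<Rightarrow> real) \<Rightarrow> real" where
  "I0sq a V u0 u1 =
     (LINT x|lborel. (u0 x)\<^sup>2) + (LINT x|lborel. (deriv u0 x)\<^sup>2)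
   + (LINT x|lborel. (u1 x)\<^sup>2)
   + (LINT x|lborel. ((u1 x + a x * u0 x) / sqrt (V x))\<^sup>2)"

end

(* Solutions propagate with unit speed, so on a time interval [0, T] all integrals can be taken over
   a bounded interval at whose ends the solution vanishes, and conservation laws hold without
   boundary terms.  The energy E(t) is nonincreasing, so it suffices to bound the space-time energy
   int_0^T E by the data.  The time primitive W = int_0^t u solves the same equation with the
   stationary source u1 + a u0; its energy identity bounds ||u(T)||^2 and the space-time integral
   of a u^2 by ||u0||^2 + ||(u1 + a u0) / sqrt V||^2.  The multipliers u (equipartition) and
   mu(x) u_x with mu = L arctan (x / L) (Morawetz) write the energy density as time derivatives of
   bounded quantities plus damping terms a u_t^2 and a u^2, plus V(0) u^2 on [-L-1, L+1].  A
   Poincare-type inequality bounds the last term by C* int int u_x^2 plus damping terms, and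
   4 V(0) C* < 1 allows it to be absorbed.  Hence (1 + T) E(T) <= C I0^2, and V u^2 controls u^2
   on [-L, L] because V is unimodal with its maximum at 0. *)

theory Submission
  imports Defs
begin

section \<open>Integrals over rectangles and balance laws\<close>

lemma at_within_Icc_eq_atLeast:
  fixes t T :: real
  assumes "t < T"
  shows "at t within {0..T} = at t within {0..}"
  by (rule at_within_nhd[where S="{..<T}"]) (use assms in auto)

lemma fundamental_theorem_of_calculus_within:
  fixes f f' :: "real \<Rightarrow> real"
  assumes "a \<le> b" "{a..b} \<subseteq> S" "\<And>t. t \<in> {a..b} \<Longrightarrow> (f has_real_derivative f' t) (at t within S)"
  shows "(f' has_integral (f b - f a)) {a..b}"
proof (rule fundamental_theorem_of_calculus[OF assms(1)])
  fix t assume "t \<in> {a..b}"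
  then have "(f has_real_derivative f' t) (at t within {a..b})"
    using assms(2,3) by (blast intro: DERIV_subset)
  then show "(f has_vector_derivative f' t) (at t within {a..b})"
    by (simp add: has_real_derivative_iff_has_vector_derivative)
qed

lemma DERIV_eq_0_if_vanishing_on_open:
  fixes f :: "real \<Rightarrow> real"
  assumes "(f has_real_derivative f') (at x)" "open S" "x \<in> S" "\<And>y. y \<in> S \<Longrightarrow> f y = 0"
  shows "f' = 0"
proof -
  have "((\<lambda>y. 0) has_real_derivative f') (at x)"
    by (rule has_field_derivative_transform_within_open[OF assms(1-3)]) (use assms(4) in auto)
  then show ?thesis using DERIV_unique DERIV_const by blast
qed

lemma integral_nonpos:
  fixes f :: "'a::euclidean_space \<Rightarrow> real"
  assumes "f integrable_on S" "\<And>x. x \<in> S \<Longrightarrow> f x \<le> 0"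
  shows "integral S f \<le> 0"
  using integral_le[OF assms(1) integrable_0] assms(2) by force

lemma continuous_on_compose_UNIV:
  "continuous_on UNIV g \<Longrightarrow> continuous_on S f \<Longrightarrow> continuous_on S (\<lambda>s. g (f s))"
  by (rule continuous_on_compose2) auto

lemma continuous_on_compose_curried:
  fixes w :: "'a::topological_space \<Rightarrow> 'b::topological_space \<Rightarrow> 'c::topological_space"
  assumes "continuous_on (X \<times> UNIV) (\<lambda>(t, x). w t x)"
    and "continuous_on S f" "continuous_on S g" "\<And>s. s \<in> S \<Longrightarrow> f s \<in> X"
  shows "continuous_on S (\<lambda>s. w (f s) (g s))"
proof -
  have "continuous_on S (\<lambda>s. (\<lambda>(t, x). w t x) (f s, g s))"
    by (rule continuous_on_compose2[OF assms(1)]) (use assms(2-4) in \<open>auto intro!: continuous_intros\<close>)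
  then show ?thesis by simp
qed

lemma continuous_on_slice:
  fixes h :: "real \<Rightarrow> real \<Rightarrow> real"
  assumes "continuous_on ({a..b} \<times> {c..d}) (\<lambda>p. h (fst p) (snd p))" "t \<in> {a..b}"
  shows "continuous_on {c..d} (h t)"
  by (rule continuous_on_compose2[OF assms(1), where f="\<lambda>x. (t, x)", simplified])
     (use assms(2) in \<open>auto intro!: continuous_intros\<close>)

lemma continuous_on_swap_Icc:
  fixes h :: "real \<Rightarrow> real \<Rightarrow> real"
  assumes "continuous_on ({a..b} \<times> {c..d}) (\<lambda>p. h (fst p) (snd p))"
  shows "continuous_on ({c..d} \<times> {a..b}) (\<lambda>(x, t). h t x)"
proof -
  have "continuous_on ({c..d} \<times> {a..b}) (\<lambda>p. (\<lambda>p. h (fst p) (snd p)) (snd p, fst p))"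
    by (rule continuous_on_compose2[OF assms]) (auto intro!: continuous_intros)
  then show ?thesis by (simp add: case_prod_beta)
qed

lemma integral_swap_Icc:
  fixes h :: "real \<Rightarrow> real \<Rightarrow> real"
  assumes "continuous_on ({a..b} \<times> {c..d}) (\<lambda>p. h (fst p) (snd p))"
  shows "integral {c..d} (\<lambda>x. integral {a..b} (\<lambda>t. h t x))
       = integral {a..b} (\<lambda>t. integral {c..d} (h t))"
  using integral_swap_continuous[where a=c and b=d and c=a and d=b and f="\<lambda>x t. h t x"]
    continuous_on_swap_Icc[OF assms] by (simp add: cbox_Pair_eq)

lemma continuous_on_integral_snd:
  fixes h :: "real \<Rightarrow> real \<Rightarrow> real"
  assumes "continuous_on ({a..b} \<times> {c..d}) (\<lambda>p. h (fst p) (snd p))"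
  shows "continuous_on {a..b} (\<lambda>t. integral {c..d} (h t))"
  using integral_continuous_on_param[of "{a..b}" c d "\<lambda>t x. h t x"] assms by (simp add: case_prod_beta)

lemma continuous_on_integral_fst:
  fixes h :: "real \<Rightarrow> real \<Rightarrow> real"
  assumes "continuous_on ({a..b} \<times> {c..d}) (\<lambda>p. h (fst p) (snd p))"
  shows "continuous_on {c..d} (\<lambda>x. integral {a..b} (\<lambda>t. h t x))"
  using integral_continuous_on_param[of "{c..d}" a b "\<lambda>x t. h t x"] continuous_on_swap_Icc[OF assms]
  by simp

lemma integral_diff_eq_integral_time_deriv:
  fixes A A' :: "real \<Rightarrow> real \<Rightarrow> real"
  assumes ST: "S \<le> T" "{S..T} \<subseteq> U"
    and A_deriv: "\<And>t x. t \<in> {S..T} \<Longrightarrow> x \<in> {c..d} \<Longrightarrow>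
      ((\<lambda>s. A s x) has_real_derivative A' t x) (at t within U)"
    and A'_cont: "continuous_on ({S..T} \<times> {c..d}) (\<lambda>p. A' (fst p) (snd p))"
    and A_cont: "continuous_on {c..d} (A S)"
  shows "integral {c..d} (A T) - integral {c..d} (A S) = integral {S..T} (\<lambda>t. integral {c..d} (A' t))"
proof -
  have A_T: "A T x = A S x + integral {S..T} (\<lambda>t. A' t x)" if x: "x \<in> {c..d}" for x
  proof -
    have "((\<lambda>t. A' t x) has_integral A T x - A S x) {S..T}"
      by (rule fundamental_theorem_of_calculus_within[OF ST]) (use A_deriv x in auto)
    then show ?thesis by (simp add: integral_unique)
  qed
  have "integral {c..d} (A T) = integral {c..d} (\<lambda>x. A S x + integral {S..T} (\<lambda>t. A' t x))"
    by (rule integral_cong) (use A_T in auto)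
  also have "\<dots> = integral {c..d} (A S) + integral {c..d} (\<lambda>x. integral {S..T} (\<lambda>t. A' t x))"
    by (rule integral_add)
      (auto intro!: integrable_continuous_real A_cont continuous_on_integral_fst[OF A'_cont])
  also have "integral {c..d} (\<lambda>x. integral {S..T} (\<lambda>t. A' t x))
      = integral {S..T} (\<lambda>t. integral {c..d} (A' t))"
    by (rule integral_swap_Icc[OF A'_cont])
  finally show ?thesis by simp
qed

text \<open>Integrated form of \<open>\<partial>\<^sub>t A + \<partial>\<^sub>x B = G\<close> when the flux \<open>B\<close> vanishes at both ends.\<close>
lemma balance_law_integral:
  fixes A A' B B' G :: "real \<Rightarrow> real \<Rightarrow> real"
  assumes ST: "S \<le> T" "{S..T} \<subseteq> U" and cd: "c \<le> d"
    and A_deriv: "\<And>t x. t \<in> {S..T} \<Longrightarrow> x \<in> {c..d} \<Longrightarrow>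
      ((\<lambda>s. A s x) has_real_derivative A' t x) (at t within U)"
    and B_deriv: "\<And>t x. t \<in> {S..T} \<Longrightarrow> x \<in> {c..d} \<Longrightarrow>
      ((\<lambda>y. B t y) has_real_derivative B' t x) (at x)"
    and A'_cont: "continuous_on ({S..T} \<times> {c..d}) (\<lambda>p. A' (fst p) (snd p))"
    and A_cont: "continuous_on {c..d} (A S)"
    and B_ends: "\<And>t. t \<in> {S..T} \<Longrightarrow> B t c = 0" "\<And>t. t \<in> {S..T} \<Longrightarrow> B t d = 0"
    and G: "\<And>t x. t \<in> {S..T} \<Longrightarrow> x \<in> {c..d} \<Longrightarrow> G t x = A' t x + B' t x"
  shows "integral {c..d} (A T) - integral {c..d} (A S) = integral {S..T} (\<lambda>t. integral {c..d} (G t))"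
    and "(\<lambda>t. integral {c..d} (G t)) integrable_on {S..T}"
    and "\<And>t. t \<in> {S..T} \<Longrightarrow> G t integrable_on {c..d}"
proof -
  have G_int: "(G t has_integral integral {c..d} (A' t)) {c..d}" if t: "t \<in> {S..T}" for t
  proof -
    have "(B' t has_integral B t d - B t c) {c..d}"
      by (rule fundamental_theorem_of_calculus_within[OF cd subset_UNIV]) (use B_deriv t in auto)
    then have "(B' t has_integral 0) {c..d}" using B_ends t by simp
    moreover have "A' t integrable_on {c..d}"
      by (rule integrable_continuous_real, rule continuous_on_slice[OF A'_cont t])
    ultimately have "((\<lambda>x. A' t x + B' t x) has_integral integral {c..d} (A' t)) {c..d}"
      using has_integral_add[OF integrable_integral] by fastforce
    then show ?thesis by (rule has_integral_eq[rotated]) (use G t in auto)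
  qed
  show "G t integrable_on {c..d}" if "t \<in> {S..T}" for t
    using G_int[OF that] by blast
  have G_eq: "integral {c..d} (G t) = integral {c..d} (A' t)" if "t \<in> {S..T}" for t
    using G_int[OF that] by (rule integral_unique)
  show "(\<lambda>t. integral {c..d} (G t)) integrable_on {S..T}"
    by (rule integrable_eq[OF integrable_continuous_real[OF continuous_on_integral_snd[OF A'_cont]]])
      (use G_eq in auto)
  have "integral {S..T} (\<lambda>t. integral {c..d} (A' t)) = integral {S..T} (\<lambda>t. integral {c..d} (G t))"
    by (rule integral_cong) (use G_eq in auto)
  then show "integral {c..d} (A T) - integral {c..d} (A S) = integral {S..T} (\<lambda>t. integral {c..d} (G t))"
    using integral_diff_eq_integral_time_deriv[OF ST A_deriv A'_cont A_cont] by simp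
qed

lemma integral_upto_eq_integral_min:
  fixes h :: "real \<Rightarrow> real"
  assumes "continuous_on {0..T} h" "t \<in> {0..T}"
  shows "integral {0..t} h = integral {0..T} (\<lambda>s. h (min s t)) - (T - t) * h t"
proof -
  have c: "continuous_on {0..T} (\<lambda>s. h (min s t))"
    by (rule continuous_on_compose2[OF assms(1)]) (use assms(2) in \<open>auto intro!: continuous_intros\<close>)
  have "integral {0..T} (\<lambda>s. h (min s t))
      = integral {0..t} (\<lambda>s. h (min s t)) + integral {t..T} (\<lambda>s. h (min s t))"
    by (rule Henstock_Kurzweil_Integration.integral_combine[symmetric])
      (use assms(2) c in \<open>auto intro: integrable_continuous_real\<close>)
  also have "integral {0..t} (\<lambda>s. h (min s t)) = integral {0..t} h"
    by (rule integral_cong) auto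
  also have "integral {t..T} (\<lambda>s. h (min s t)) = integral {t..T} (\<lambda>s. h t)"
    by (rule integral_cong) auto
  also have "\<dots> = (T - t) * h t" using assms(2) by simp
  finally show ?thesis by simp
qed

text \<open>Freezing the integrand at \<open>min s t\<close> turns the variable upper limit into a fixed one,
  so that continuity follows from continuity of parametric integrals.\<close>
lemma continuous_on_integral_upto:
  fixes h :: "real \<Rightarrow> real \<Rightarrow> real"
  assumes h: "continuous_on ({0..T} \<times> X) (\<lambda>p. h (fst p) (snd p))"
  shows "continuous_on ({0..T} \<times> X) (\<lambda>(t, x). integral {0..t} (\<lambda>s. h s x))"
proof -
  have "continuous_on (({0..T} \<times> X) \<times> cbox 0 T)
      (\<lambda>q. (\<lambda>p. h (fst p) (snd p)) (min (snd q) (fst (fst q)), snd (fst q)))"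
    by (rule continuous_on_compose2[OF h]) (auto intro!: continuous_intros)
  then have "continuous_on ({0..T} \<times> X) (\<lambda>p. integral (cbox 0 T) (\<lambda>s. h (min s (fst p)) (snd p)))"
    by (intro integral_continuous_on_param) (simp add: case_prod_beta)
  then have "continuous_on ({0..T} \<times> X)
      (\<lambda>p. integral {0..T} (\<lambda>s. h (min s (fst p)) (snd p)) - (T - fst p) * h (fst p) (snd p))"
    using h by (auto intro!: continuous_intros)
  then show ?thesis
  proof (rule continuous_on_eq)
    fix p assume p: "p \<in> {0..T} \<times> X"
    have "continuous_on {0..T} (\<lambda>s. h s (snd p))"
      by (rule continuous_on_compose2[OF h, where f="\<lambda>s. (s, snd p)", simplified])
        (use p in \<open>auto intro!: continuous_intros\<close>)
    from integral_upto_eq_integral_min[OF this, of "fst p"] p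
    show "integral {0..T} (\<lambda>s. h (min s (fst p)) (snd p)) - (T - fst p) * h (fst p) (snd p)
        = (\<lambda>(t, x). integral {0..t} (\<lambda>s. h s x)) p"
      by (auto simp: case_prod_beta)
  qed
qed

lemma has_real_derivative_integral_upto:
  fixes h :: "real \<Rightarrow> real"
  assumes "0 \<le> t" "continuous_on {0..} h"
  shows "((\<lambda>s. integral {0..s} h) has_real_derivative h t) (at t within {0..})"
proof -
  have "((\<lambda>s. integral {0..s} h) has_real_derivative h t) (at t within {0..t+1})"
    by (rule integral_has_real_derivative) (use assms in \<open>auto intro: continuous_on_subset\<close>)
  then show ?thesis by (simp add: at_within_Icc_eq_atLeast)
qed

lemma set_integral_Icc_eq_integral:
  fixes g :: "real \<Rightarrow> real"
  assumes "continuous_on {a..b} g"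
  shows "(LBINT x:{a..b}. g x) = integral {a..b} g"
proof -
  have "set_integrable lborel {a..b} g"
    unfolding set_integrable_def by (rule borel_integrable_compact) (use assms in auto)
  then show ?thesis by (rule set_borel_integral_eq_integral(2))
qed

lemma lebesgue_integral_eq_integral_Icc:
  fixes g :: "real \<Rightarrow> real"
  assumes g: "continuous_on UNIV g" and supp: "\<And>x. d < \<bar>x\<bar> \<Longrightarrow> g x = 0"
  shows "(LINT x|lborel. g x) = integral {-d..d} g"
proof -
  have g_eq: "(\<lambda>x. indicator {-d..d} x *\<^sub>R g x) = g"
  proof
    fix x show "indicator {-d..d} x *\<^sub>R g x = g x"
      using supp[of x] by (cases "x \<in> {-d..d}") auto
  qed
  have "set_integrable lborel {-d..d} g"
    unfolding set_integrable_def by (rule borel_integrable_compact) (auto intro: continuous_on_subset[OF g])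
  then have "(LBINT x:{-d..d}. g x) = integral {-d..d} g"
    by (rule set_borel_integral_eq_integral(2))
  then show ?thesis unfolding set_lebesgue_integral_def g_eq .
qed

section \<open>A weighted Poincare inequality\<close>

lemma square_integral_le:
  fixes h :: "real \<Rightarrow> real"
  assumes xy: "x \<le> y" and h: "continuous_on {x..y} h"
  shows "(integral {x..y} h)^2 \<le> (y - x) * integral {x..y} (\<lambda>s. (h s)^2)"
proof (cases "x = y")
  case False
  then have len: "0 < y - x" using xy by simp
  define I where "I = integral {x..y} h"
  define J where "J = integral {x..y} (\<lambda>s. (h s)^2)"
  define k where "k = I / (y - x)"
  have hI: "(h has_integral I) {x..y}" unfolding I_def
    by (rule integrable_integral, rule integrable_continuous_real[OF h])
  have hJ: "((\<lambda>s. (h s)^2) has_integral J) {x..y}" unfolding J_def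
    by (rule integrable_integral, rule integrable_continuous_real) (use h in \<open>auto intro!: continuous_intros\<close>)
  have "((\<lambda>s. (h s)^2 - 2 * k * h s + k^2) has_integral (J - 2 * k * I + (y - x) * k^2)) {x..y}"
    using has_integral_add[OF has_integral_diff[OF hJ has_integral_mult_right[OF hI, of "2 * k"]]
        has_integral_const_real[of "k^2" x y]] xy
    by simp
  moreover have "(h s)^2 - 2 * k * h s + k^2 = (h s - k)^2" for s
    by (simp add: power2_eq_square algebra_simps)
  ultimately have "0 \<le> J - 2 * k * I + (y - x) * k^2"
    by (metis (no_types, lifting) has_integral_nonneg zero_le_power2)
  moreover have kI: "k * (y - x) = I" using len by (simp add: k_def)
  ultimately have J_ge: "k^2 * (y - x) \<le> J"
    by (simp add: power2_eq_square algebra_simps flip: kI)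
  have "I^2 = (k^2 * (y - x)) * (y - x)" by (simp add: power2_eq_square flip: kI)
  also have "\<dots> \<le> J * (y - x)" using J_ge len by (intro mult_right_mono) auto
  finally have "I^2 \<le> (y - x) * J" by (simp add: mult.commute)
  then show ?thesis unfolding I_def J_def .
qed simp

definition poincare_const :: "real \<Rightarrow> real" where
  "poincare_const L = 4 * (L + 1) * (2 * L + 3)"

lemma poincare_const_pos: "0 < L \<Longrightarrow> 0 < poincare_const L"
  unfolding poincare_const_def by simp

lemma square_le_integrals:
  fixes g g' :: "real \<Rightarrow> real"
  assumes dg: "\<And>x. (g has_real_derivative g' x) (at x)" and g': "continuous_on {c..d} g'"
    and x: "x \<in> {-(L+1)..L+1}" and cd: "c \<le> -(L+1)" "L + 2 \<le> d"
  shows "(g x)^2 \<le> 2 * integral {L+1..L+2} (\<lambda>y. (g y)^2) + 2 * (2*L+3) * integral {c..d} (\<lambda>y. (g' y)^2)"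
proof -
  define Q where "Q = integral {c..d} (\<lambda>y. (g' y)^2)"
  have g_cont: "continuous_on S g" for S
    using dg by (meson DERIV_continuous_on DERIV_subset subset_UNIV)
  have pointwise: "(g x)^2 \<le> 2 * (g y)^2 + 2 * (2*L+3) * Q" if y: "y \<in> {L+1..L+2}" for y
  proof -
    have xy: "x \<le> y" and sub: "{x..y} \<subseteq> {c..d}" using x y cd by auto
    have g'xy: "continuous_on {x..y} g'" using continuous_on_subset[OF g' sub] .
    have "(g' has_integral (g y - g x)) {x..y}"
      by (rule fundamental_theorem_of_calculus_within[OF xy subset_UNIV]) (use dg in auto)
    then have "(g y - g x)^2 \<le> (y - x) * integral {x..y} (\<lambda>s. (g' s)^2)"
      using square_integral_le[OF xy g'xy] by (simp add: integral_unique)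
    also have "\<dots> \<le> (2*L+3) * Q"
    proof (rule mult_mono)
      show "integral {x..y} (\<lambda>s. (g' s)^2) \<le> Q" unfolding Q_def
        by (rule integral_subset_le[OF sub])
          (use g' g'xy in \<open>auto intro!: integrable_continuous_real continuous_intros\<close>)
      show "0 \<le> integral {x..y} (\<lambda>s. (g' s)^2)"
        by (rule integral_nonneg) (use g'xy in \<open>auto intro!: integrable_continuous_real continuous_intros\<close>)
    qed (use x y in auto)
    finally have "(g y - g x)^2 \<le> (2*L+3) * Q" .
    moreover have "(g x)^2 \<le> 2 * (g y)^2 + 2 * (g y - g x)^2"
      using zero_le_power2[of "2 * g y - g x"] by (simp add: power2_eq_square algebra_simps)
    ultimately show ?thesis by linarith
  qed
  have "integral {L+1..L+2} (\<lambda>y. (g x)^2) \<le> integral {L+1..L+2} (\<lambda>y. 2 * (g y)^2 + 2 * (2*L+3) * Q)"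
    by (rule integral_le) (use pointwise g_cont in \<open>auto intro!: integrable_continuous_real continuous_intros\<close>)
  also have "\<dots> = 2 * integral {L+1..L+2} (\<lambda>y. (g y)^2) + 2 * (2*L+3) * Q"
    by (subst integral_add) (use g_cont in \<open>auto intro!: integrable_continuous_real continuous_intros\<close>)
  finally show ?thesis unfolding Q_def by simp
qed

lemma weighted_poincare:
  fixes g g' \<rho> :: "real \<Rightarrow> real"
  assumes L: "0 < L" and cd: "c \<le> -(L+1)" "L + 2 \<le> d"
    and dg: "\<And>x. (g has_real_derivative g' x) (at x)" and g': "continuous_on {c..d} g'"
    and \<rho>: "continuous_on {c..d} \<rho>" "\<And>x. 0 \<le> \<rho> x" "\<And>x. \<rho> x \<le> 1"
    and \<rho>_supp: "\<And>x. L + 1 \<le> \<bar>x\<bar> \<Longrightarrow> \<rho> x = 0"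
  shows "integral {c..d} (\<lambda>x. \<rho> x * (g x)^2) \<le> poincare_const L * integral {c..d} (\<lambda>x. (g' x)^2)
           + 4*(L+1) * integral {L+1..L+2} (\<lambda>x. (g x)^2)"
proof -
  define K where "K = 2 * integral {L+1..L+2} (\<lambda>y. (g y)^2) + 2 * (2*L+3) * integral {c..d} (\<lambda>y. (g' y)^2)"
  have g_cont: "continuous_on S g" for S
    using dg by (meson DERIV_continuous_on DERIV_subset subset_UNIV)
  have K_nonneg: "0 \<le> K" unfolding K_def using L g_cont g'
    by (intro add_nonneg_nonneg mult_nonneg_nonneg integral_nonneg)
      (auto intro!: integrable_continuous_real continuous_intros)
  have "\<rho> x * (g x)^2 \<le> K * \<rho> x" for x
  proof (cases "L + 1 \<le> \<bar>x\<bar>")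
    case False
    then have "(g x)^2 \<le> K" unfolding K_def by (intro square_le_integrals[OF dg g' _ cd]) auto
    then show ?thesis using mult_right_mono[OF _ \<rho>(2)[of x]] by (metis mult.commute)
  qed (simp add: \<rho>_supp)
  then have "integral {c..d} (\<lambda>x. \<rho> x * (g x)^2) \<le> integral {c..d} (\<lambda>x. K * \<rho> x)"
    by (intro integral_le) (use \<rho> g_cont in \<open>auto intro!: integrable_continuous_real continuous_intros\<close>)
  also have "\<dots> = K * integral {c..d} \<rho>" by simp
  also have "integral {c..d} \<rho> \<le> 2 * (L + 1)"
  proof -
    have "integral {c..d} \<rho> = integral {c..d} (\<lambda>x. if x \<in> {-(L+1)..L+1} then \<rho> x else 0)"
      by (rule integral_cong) (use \<rho>_supp in auto)
    also have "\<dots> = integral ({-(L+1)..L+1} \<inter> {c..d}) \<rho>"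
      by (rule Henstock_Kurzweil_Integration.integral_restrict_Int)
    also have "{-(L+1)..L+1} \<inter> {c..d} = {-(L+1)..L+1}" using cd by auto
    also have "integral {-(L+1)..L+1} \<rho> \<le> integral {-(L+1)..L+1} (\<lambda>x. 1)"
      by (rule integral_le) (use \<rho> cd in \<open>auto intro!: integrable_continuous_real intro: continuous_on_subset\<close>)
    finally show ?thesis using L by simp
  qed
  then have "K * integral {c..d} \<rho> \<le> K * (2 * (L + 1))"
    by (rule mult_left_mono[OF _ K_nonneg])
  finally show ?thesis unfolding K_def poincare_const_def by (simp add: algebra_simps)
qed

section \<open>Weights for finite speed of propagation\<close>

lemma abs_le_sqrt_sq_plus_1: "\<bar>y\<bar> \<le> sqrt (y^2 + 1)"
  by (metis real_sqrt_abs real_sqrt_le_mono le_add_same_cancel1 zero_le_one)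

lemma has_real_derivative_sqrt_dist:
  "((\<lambda>y. sqrt ((y - z)^2 + 1)) has_real_derivative (x - z) / sqrt ((x - z)^2 + 1)) (at x)"
proof -
  have "0 < (x - z)^2 + 1" by (smt (verit) zero_le_power2)
  then show ?thesis by (auto intro!: derivative_eq_intros simp: field_simps)
qed

definition neg_sq :: "real \<Rightarrow> real" where
  "neg_sq z = (min z 0)^2"

lemma neg_sq_has_real_derivative: "(neg_sq has_real_derivative 2 * min z 0) (at z)"
proof -
  consider "z < 0" | "z > 0" | "z = 0" by linarith
  then show ?thesis
  proof cases
    case 1
    have "((\<lambda>y. y^2) has_real_derivative 2 * z) (at z)"
      by (auto intro!: derivative_eq_intros)
    then have "(neg_sq has_real_derivative 2 * z) (at z)"
      by (rule has_field_derivative_transform_within_open[where S="{..<0}"])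
        (use 1 in \<open>auto simp: neg_sq_def\<close>)
    then show ?thesis using 1 by simp
  next
    case 2
    have "((\<lambda>y. 0) has_real_derivative 0) (at z)" by simp
    then have "(neg_sq has_real_derivative 0) (at z)"
      by (rule has_field_derivative_transform_within_open[where S="{0<..}"])
        (use 2 in \<open>auto simp: neg_sq_def\<close>)
    then show ?thesis using 2 by simp
  next
    case 3
    have "isCont (\<lambda>y::real. min y 0) 0" by (intro continuous_intros)
    then have "((\<lambda>y. min y 0) \<longlongrightarrow> 0) (at (0::real))" by (simp add: isCont_def)
    moreover have "\<forall>\<^sub>F y in at (0::real). min y 0 = (neg_sq y - neg_sq 0) / (y - 0)"
      unfolding eventually_at_filter
      by (rule always_eventually) (auto simp: neg_sq_def power2_eq_square min_def)
    ultimately have "((\<lambda>y. (neg_sq y - neg_sq 0) / (y - 0)) \<longlongrightarrow> 0) (at (0::real))"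
      using tendsto_cong by fastforce
    then show ?thesis using 3 by (simp add: has_field_derivative_iff)
  qed
qed

lemma neg_sq_chain [derivative_intros]:
  "(g has_real_derivative g') (at x within S) \<Longrightarrow>
   ((\<lambda>y. neg_sq (g y)) has_real_derivative 2 * min (g x) 0 * g') (at x within S)"
  by (rule DERIV_chain2[OF neg_sq_has_real_derivative])

lemma neg_sq_nonneg: "0 \<le> neg_sq z"
  and neg_sq_eq_0: "0 \<le> z \<Longrightarrow> neg_sq z = 0"
  and neg_sq_pos: "z < 0 \<Longrightarrow> 0 < neg_sq z"
  by (simp_all add: neg_sq_def)

lemma continuous_on_neg_sq [continuous_intros]:
  "continuous_on S f \<Longrightarrow> continuous_on S (\<lambda>x. neg_sq (f x))"
  unfolding neg_sq_def by (intro continuous_intros)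

section \<open>Coefficients and the pointwise energy inequality\<close>

locale damped_wave_coeffs =
  fixes a V :: "real \<Rightarrow> real" and A Vmax L \<epsilon>1 :: real
  assumes a_cont: "continuous_on UNIV a" and a_nonneg: "\<And>x. 0 \<le> a x" and a_le: "\<And>x. a x \<le> A"
    and eps_pos: "0 < \<epsilon>1" and L_pos: "0 < L" and a_ge_eps: "\<And>x. L \<le> \<bar>x\<bar> \<Longrightarrow> \<epsilon>1 \<le> a x"
    and V_cont: "continuous_on UNIV V" and V_pos: "\<And>x. 0 < V x" and V_le: "\<And>x. V x \<le> Vmax"
    and V_deriv: "\<And>x. (V has_real_derivative deriv V x) (at x)"
    and V'_cont: "continuous_on UNIV (deriv V)" and V'_sign: "\<And>x. deriv V x * x \<le> 0"
    and V0_small: "4 * V 0 * poincare_const L < 1"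
begin

lemmas continuous_on_a [continuous_intros] = continuous_on_compose_UNIV[OF a_cont]
lemmas continuous_on_V [continuous_intros] = continuous_on_compose_UNIV[OF V_cont]
lemmas continuous_on_V' [continuous_intros] = continuous_on_compose_UNIV[OF V'_cont]

lemma A_nonneg: "0 \<le> A"
  using a_nonneg[of 0] a_le[of 0] by simp

lemma Vmax_nonneg: "0 \<le> Vmax"
  using V_pos[of 0] V_le[of 0] by simp

lemma V_antimono_nonneg:
  assumes "0 \<le> x" "x \<le> y"
  shows "V y \<le> V x"
proof (cases "x = y")
  case False
  then have "x < y" using assms by simp
  then obtain z where z: "x < z" "z < y" "V y - V x = (y - x) * deriv V z"
    using MVT2[of x y V "deriv V"] V_deriv by blast
  have "deriv V z \<le> 0"
    using V'_sign[of z] z assms by (simp add: mult_le_0_iff)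
  then have "(y - x) * deriv V z \<le> 0" using \<open>x < y\<close> by (simp add: mult_nonneg_nonpos)
  then show ?thesis using z by simp
qed simp

lemma V_mono_nonpos:
  assumes "y \<le> x" "x \<le> 0"
  shows "V y \<le> V x"
proof (cases "x = y")
  case False
  then have "y < x" using assms by simp
  then obtain z where z: "y < z" "z < x" "V x - V y = (x - y) * deriv V z"
    using MVT2[of y x V "deriv V"] V_deriv by blast
  have "0 \<le> deriv V z"
    using V'_sign[of z] z assms by (simp add: mult_le_0_iff)
  then have "0 \<le> (x - y) * deriv V z" using \<open>y < x\<close> by simp
  then show ?thesis using z by simp
qed simp

lemma V_le_V0: "V x \<le> V 0"
  by (cases "0 \<le> x") (auto intro: V_antimono_nonneg V_mono_nonpos)

lemma V_ge_min_ends: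
  assumes "\<bar>x\<bar> \<le> L"
  shows "min (V L) (V (-L)) \<le> V x"
proof (cases "0 \<le> x")
  case True
  then have "V L \<le> V x" using assms by (intro V_antimono_nonneg) auto
  then show ?thesis by simp
next
  case False
  then have "V (-L) \<le> V x" using assms by (intro V_mono_nonpos) auto
  then show ?thesis by simp
qed

text \<open>The Morawetz multiplier is bounded, so that its boundary terms are controlled by the energy,
  and has \<open>\<mu>' \<ge> 1/2\<close> on \<open>[-L, L]\<close>, where the damping gives no control.\<close>
definition \<mu> :: "real \<Rightarrow> real" where
  "\<mu> x = L * arctan (x / L)"

definition \<mu>' :: "real \<Rightarrow> real" where
  "\<mu>' x = 1 / (1 + (x / L)^2)"

definition \<mu>_sup :: real where
  "\<mu>_sup = L * pi / 2"

lemma \<mu>_has_real_derivative: "(\<mu> has_real_derivative \<mu>' x) (at x)"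
proof -
  have "1 + (x / L)^2 \<noteq> 0" by (smt (verit) zero_le_power2)
  then show ?thesis unfolding \<mu>_def \<mu>'_def using L_pos
    by (auto intro!: derivative_eq_intros simp: power2_eq_square field_simps)
qed

lemma continuous_on_\<mu> [continuous_intros]: "continuous_on S f \<Longrightarrow> continuous_on S (\<lambda>s. \<mu> (f s))"
  by (rule continuous_on_compose_UNIV[OF DERIV_continuous_on]) (use \<mu>_has_real_derivative in blast)

lemma continuous_on_\<mu>' [continuous_intros]: "continuous_on S f \<Longrightarrow> continuous_on S (\<lambda>s. \<mu>' (f s))"
proof -
  have "1 + (x / L)^2 \<noteq> 0" for x by (smt (verit) zero_le_power2)
  then have "continuous_on UNIV \<mu>'" unfolding \<mu>'_def using L_pos by (intro continuous_intros) auto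
  then show "continuous_on S f \<Longrightarrow> continuous_on S (\<lambda>s. \<mu>' (f s))" by (rule continuous_on_compose_UNIV)
qed

lemma \<mu>_deriv_V_nonpos: "\<mu> x * deriv V x \<le> 0"
proof (cases x "0::real" rule: linorder_cases)
  case less
  then have "0 \<le> deriv V x" using V'_sign[of x] by (simp add: mult_le_0_iff)
  moreover have "\<mu> x < 0" unfolding \<mu>_def using less L_pos by (simp add: mult_pos_neg divide_neg_pos)
  ultimately show ?thesis by (simp add: mult_nonpos_nonneg)
next
  case greater
  then have "deriv V x \<le> 0" using V'_sign[of x] by (simp add: mult_le_0_iff)
  moreover have "0 < \<mu> x" unfolding \<mu>_def using greater L_pos by simp
  ultimately show ?thesis by (simp add: mult_nonneg_nonpos)
qed (simp add: \<mu>_def)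

lemma abs_\<mu>_le: "\<bar>\<mu> x\<bar> \<le> \<mu>_sup"
proof -
  have "\<bar>arctan (x / L)\<bar> \<le> pi / 2" using arctan_bounded[of "x / L"] by auto
  then show ?thesis unfolding \<mu>_def \<mu>_sup_def using L_pos by (simp add: abs_mult mult_left_mono)
qed

lemma \<mu>'_pos: "0 < \<mu>' x" and \<mu>'_le_1: "\<mu>' x \<le> 1"
proof -
  have "0 < 1 + (x / L)^2" by (smt (verit) zero_le_power2)
  then show "0 < \<mu>' x" "\<mu>' x \<le> 1" unfolding \<mu>'_def by simp_all
qed

lemma \<mu>'_ge_half: "\<bar>x\<bar> \<le> L \<Longrightarrow> 1/2 \<le> \<mu>' x"
proof -
  assume "\<bar>x\<bar> \<le> L"
  then have "\<bar>x / L\<bar> \<le> 1" using L_pos by (simp add: abs_divide)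
  then have "(x / L)^2 \<le> 1" by (simp add: abs_square_le_1)
  moreover have "0 < 1 + (x / L)^2" by (smt (verit) zero_le_power2)
  ultimately show ?thesis unfolding \<mu>'_def by (simp add: field_simps)
qed

definition cutoff :: "real \<Rightarrow> real" where
  "cutoff x = max 0 (min 1 (L + 1 - \<bar>x\<bar>))"

lemma continuous_on_cutoff [continuous_intros]:
  "continuous_on S f \<Longrightarrow> continuous_on S (\<lambda>s. cutoff (f s))"
  unfolding cutoff_def by (intro continuous_intros)

lemma cutoff_nonneg: "0 \<le> cutoff x"
  and cutoff_le_1: "cutoff x \<le> 1"
  and cutoff_eq_0: "L + 1 \<le> \<bar>x\<bar> \<Longrightarrow> cutoff x = 0"
  and cutoff_eq_1: "\<bar>x\<bar> \<le> L \<Longrightarrow> cutoff x = 1"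
  unfolding cutoff_def by auto

text \<open>Along
  solutions, \<open>equipartition_density\<close> and \<open>morawetz_density\<close> are the time derivatives, up to an
  \<open>x\<close>-derivative, of \<open>2 u u\<^sub>t + a u\<^sup>2\<close> and of \<open>2 \<mu> u\<^sub>t u\<^sub>x\<close>.\<close>
definition energy_density :: "real \<Rightarrow> real \<Rightarrow> real \<Rightarrow> real \<Rightarrow> real" where
  "energy_density x w wt wx = wt^2 + wx^2 + V x * w^2"

definition equipartition_density :: "real \<Rightarrow> real \<Rightarrow> real \<Rightarrow> real \<Rightarrow> real" where
  "equipartition_density x w wt wx = 2 * wt^2 - 2 * wx^2 - 2 * V x * w^2"

definition morawetz_density :: "real \<Rightarrow> real \<Rightarrow> real \<Rightarrow> real \<Rightarrow> real" where
  "morawetz_density x w wt wx =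
     - \<mu>' x * (wt^2 + wx^2) + (\<mu>' x * V x + \<mu> x * deriv V x) * w^2 - 2 * a x * \<mu> x * wt * wx"

lemma energy_density_nonneg: "0 \<le> energy_density x w wt wx"
  and energy_density_ge: "wt^2 \<le> energy_density x w wt wx" "wx^2 \<le> energy_density x w wt wx"
    "V x * w^2 \<le> energy_density x w wt wx"
  unfolding energy_density_def using V_pos[of x] by auto

text \<open>Since \<open>\<bar>r\<bar> \<le> 1\<close>, energy can only leave a backward light cone.\<close>
lemma cone_flux_nonpos:
  assumes "q \<le> 0" "0 \<le> p" "\<bar>r\<bar> \<le> 1"
  shows "q * (energy_density x w wt wx - 2 * r * wt * wx) - 2 * p * a x * wt^2 \<le> 0"
proof -
  have "wt^2 + wx^2 - 2 * r * wt * wx = (wt - r * wx)^2 + (1 - r^2) * wx^2"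
    by (simp add: algebra_simps power2_eq_square)
  moreover have "0 \<le> 1 - r^2" using assms(3) by (simp add: abs_square_le_1)
  ultimately have "0 \<le> energy_density x w wt wx - 2 * r * wt * wx"
    unfolding energy_density_def using V_pos[of x] by (smt (verit) mult_nonneg_nonneg zero_le_power2)
  then show ?thesis
    using assms(1,2) a_nonneg[of x] by (smt (verit) mult_nonneg_nonneg mult_nonpos_nonneg zero_le_power2)
qed

definition slack :: real where
  "slack = (1 - 4 * V 0 * poincare_const L) / 8"

definition c_ut :: real where
  "c_ut = 4 * A * \<mu>_sup^2 / slack + 2 / \<epsilon>1"

definition c_u :: real where
  "c_u = 4 * Vmax / \<epsilon>1"

lemma slack_pos: "0 < slack"
  unfolding slack_def using V0_small by simp

lemma kinetic_term_le: "2 * wt^2 \<le> 4 * \<mu>' x * wt^2 + (2 / \<epsilon>1) * a x * wt^2"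
proof (cases "\<bar>x\<bar> \<le> L")
  case True
  then have "2 * wt^2 \<le> 4 * \<mu>' x * wt^2"
    using mult_right_mono[OF \<mu>'_ge_half[OF True], of "wt^2"] by simp
  moreover have "0 \<le> (2 / \<epsilon>1) * a x * wt^2" using eps_pos a_nonneg[of x] by simp
  ultimately show ?thesis by linarith
next
  case False
  then have "1 \<le> a x / \<epsilon>1" using a_ge_eps[of x] eps_pos by simp
  then have "2 * wt^2 \<le> (2 / \<epsilon>1) * a x * wt^2"
    using mult_right_mono[of 1 "a x / \<epsilon>1" "2 * wt^2"] by (simp add: algebra_simps)
  moreover have "0 \<le> 4 * \<mu>' x * wt^2" using \<mu>'_pos[of x] by simp
  ultimately show ?thesis by linarith
qed

lemma cross_term_le: "- 8 * a x * \<mu> x * wt * wx \<le> 4 * slack * wx^2 + (4 * A * \<mu>_sup^2 / slack) * a x * wt^2"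
proof -
  define p where "p = a x * \<mu> x * wt"
  have "0 \<le> (slack * wx + p)^2 / slack" using slack_pos by simp
  also have "\<dots> = slack * wx^2 + 2 * p * wx + p^2 / slack"
    using slack_pos by (simp add: power2_eq_square field_simps)
  finally have young: "0 \<le> slack * wx^2 + 2 * p * wx + p^2 / slack" .
  have "p^2 = (a x)^2 * (\<mu> x)^2 * wt^2" unfolding p_def by (simp add: power_mult_distrib)
  also have "\<dots> \<le> (A * a x) * \<mu>_sup^2 * wt^2"
  proof (intro mult_right_mono mult_mono)
    show "(a x)^2 \<le> A * a x" using a_nonneg[of x] a_le[of x] by (simp add: power2_eq_square mult_right_mono)
    show "(\<mu> x)^2 \<le> \<mu>_sup^2" using abs_\<mu>_le[of x] by (metis abs_le_square_iff abs_of_nonneg abs_ge_zero order_trans)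
  qed (use A_nonneg a_nonneg[of x] in simp_all)
  finally have "p^2 / slack \<le> (A * a x * \<mu>_sup^2 * wt^2) / slack"
    using slack_pos by (simp add: divide_right_mono)
  also have "\<dots> = (A * \<mu>_sup^2 / slack) * a x * wt^2" by simp
  finally have "p^2 / slack \<le> (A * \<mu>_sup^2 / slack) * a x * wt^2" .
  with young have "- 8 * p * wx \<le> 4 * slack * wx^2 + 4 * ((A * \<mu>_sup^2 / slack) * a x * wt^2)"
    by linarith
  then show ?thesis unfolding p_def by (simp add: algebra_simps)
qed

lemma potential_term_le: "4 * V x * w^2 \<le> 4 * V 0 * cutoff x * w^2 + c_u * a x * w^2"
proof (cases "\<bar>x\<bar> \<le> L")
  case True
  moreover have "V x * w^2 \<le> V 0 * w^2" using V_le_V0[of x] by (simp add: mult_right_mono)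
  moreover have "0 \<le> c_u * a x * w^2" unfolding c_u_def using Vmax_nonneg eps_pos a_nonneg[of x] by simp
  ultimately show ?thesis by (simp add: cutoff_eq_1)
next
  case False
  then have "1 \<le> a x / \<epsilon>1" using a_ge_eps[of x] eps_pos by simp
  then have "4 * Vmax * w^2 * 1 \<le> 4 * Vmax * w^2 * (a x / \<epsilon>1)"
    using Vmax_nonneg by (intro mult_left_mono) auto
  then have "4 * V x * w^2 \<le> c_u * a x * w^2"
    using V_le[of x] unfolding c_u_def by (smt (verit) mult_right_mono times_divide_eq_left zero_le_power2 mult.commute mult.left_commute)
  moreover have "0 \<le> 4 * V 0 * cutoff x * w^2" using V_pos[of 0] cutoff_nonneg[of x] by simp
  ultimately show ?thesis by linarith
qed

lemma energy_density_le:
  "energy_density x w wt wx \<le> - (1/2) * equipartition_density x w wt wx - 4 * morawetz_density x w wt wx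
     + 4 * V 0 * cutoff x * w^2 + c_u * a x * w^2 + 4 * slack * wx^2 + c_ut * a x * wt^2"
proof -
  have "0 \<le> 4 * \<mu>' x * wx^2" using \<mu>'_pos[of x] by simp
  moreover have "0 \<le> 4 * (V x - \<mu>' x * V x) * w^2"
    using mult_right_mono[OF \<mu>'_le_1[of x] less_imp_le[OF V_pos[of x]]] by simp
  moreover have "0 \<le> - 4 * (\<mu> x * deriv V x) * w^2"
    using mult_nonpos_nonneg[OF \<mu>_deriv_V_nonpos[of x] zero_le_power2[of w]] by linarith
  ultimately show ?thesis
    using kinetic_term_le[of wt x] cross_term_le[of x wt wx] potential_term_le[of x w]
    unfolding energy_density_def equipartition_density_def morawetz_density_def c_ut_def
    by (simp add: algebra_simps)
qed

text \<open>Constants of the final estimate: the fraction \<open>absorbed < 1\<close> of the space-time energy is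
  absorbed into the left-hand side.\<close>
definition absorbed :: real where
  "absorbed = 4 * V 0 * poincare_const L + 4 * slack"

definition c_au :: real where
  "c_au = 4 * V 0 * (4 * (L + 1) / \<epsilon>1) + c_u"

definition c_init :: real where
  "c_init = 2 + A + Vmax"

definition c_rhs :: real where
  "c_rhs = (2 * c_init + 1) / 2 + 8 * \<mu>_sup * c_init + c_au / 2 + c_ut * c_init / 2"

definition c_energy :: real where
  "c_energy = c_init + c_rhs / (1 - absorbed)"

definition decay_const :: real where
  "decay_const = c_energy / min (V L) (V (-L))"

lemma absorbed_lt_1: "absorbed < 1"
  and absorbed_nonneg: "0 \<le> absorbed"
  using V0_small slack_pos V_pos[of 0] L_pos
  unfolding absorbed_def slack_def poincare_const_def by (simp_all add: field_simps)

lemma constants_nonneg: "0 \<le> \<mu>_sup" "0 \<le> c_u" "0 \<le> c_ut" "0 \<le> c_au" "0 \<le> c_init" "0 \<le> c_rhs"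
proof -
  show mu: "0 \<le> \<mu>_sup" unfolding \<mu>_sup_def using L_pos by simp
  show cu: "0 \<le> c_u" unfolding c_u_def using Vmax_nonneg eps_pos by simp
  show cut: "0 \<le> c_ut" unfolding c_ut_def using eps_pos slack_pos A_nonneg by simp
  show cau: "0 \<le> c_au" unfolding c_au_def using cu V_pos[of 0] eps_pos L_pos by simp
  show ci: "0 \<le> c_init" unfolding c_init_def using A_nonneg Vmax_nonneg by simp
  show "0 \<le> c_rhs" unfolding c_rhs_def using mu cut cau ci by simp
qed

lemma decay_const_pos: "0 < decay_const"
proof -
  have "0 < c_energy"
    unfolding c_energy_def c_init_def using constants_nonneg absorbed_lt_1 A_nonneg Vmax_nonneg
    by (simp add: add_pos_nonneg)
  then show ?thesis unfolding decay_const_def using V_pos by simp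
qed

end

section \<open>Solutions and finite speed of propagation\<close>

locale damped_wave = damped_wave_coeffs +
  fixes u0 u1 :: "real \<Rightarrow> real" and u ut ux utt utx uxx :: "real \<Rightarrow> real \<Rightarrow> real" and R0 :: real
  assumes solution: "\<forall>t\<ge>0. \<forall>x.
      ((\<lambda>s. u s x) has_real_derivative ut t x) (at t within {0..}) \<and>
      ((\<lambda>y. u t y) has_real_derivative ux t x) (at x) \<and>
      ((\<lambda>s. ut s x) has_real_derivative utt t x) (at t within {0..}) \<and>
      ((\<lambda>y. ut t y) has_real_derivative utx t x) (at x) \<and>
      ((\<lambda>y. ux t y) has_real_derivative uxx t x) (at x) \<and>
      utt t x - uxx t x + V x * u t x + a x * ut t x = 0"
    and u_cont: "continuous_on ({0..} \<times> UNIV) (\<lambda>(t, x). u t x)"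
    and ut_cont: "continuous_on ({0..} \<times> UNIV) (\<lambda>(t, x). ut t x)"
    and ux_cont: "continuous_on ({0..} \<times> UNIV) (\<lambda>(t, x). ux t x)"
    and utt_cont: "continuous_on ({0..} \<times> UNIV) (\<lambda>(t, x). utt t x)"
    and utx_cont: "continuous_on ({0..} \<times> UNIV) (\<lambda>(t, x). utx t x)"
    and uxx_cont: "continuous_on ({0..} \<times> UNIV) (\<lambda>(t, x). uxx t x)"
    and u_init_eq: "\<forall>x. u 0 x = u0 x" and ut_init_eq: "\<forall>x. ut 0 x = u1 x"
    and R0_nonneg: "0 \<le> R0"
    and u0_supp: "\<And>x. R0 < \<bar>x\<bar> \<Longrightarrow> u0 x = 0" and u1_supp: "\<And>x. R0 < \<bar>x\<bar> \<Longrightarrow> u1 x = 0"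
begin

lemma deriv_t_u: "0 \<le> t \<Longrightarrow> ((\<lambda>s. u s x) has_real_derivative ut t x) (at t within {0..})"
  and deriv_x_u: "0 \<le> t \<Longrightarrow> ((\<lambda>y. u t y) has_real_derivative ux t x) (at x)"
  and deriv_t_ut: "0 \<le> t \<Longrightarrow> ((\<lambda>s. ut s x) has_real_derivative utt t x) (at t within {0..})"
  and deriv_x_ut: "0 \<le> t \<Longrightarrow> ((\<lambda>y. ut t y) has_real_derivative utx t x) (at x)"
  and deriv_x_ux: "0 \<le> t \<Longrightarrow> ((\<lambda>y. ux t y) has_real_derivative uxx t x) (at x)"
  and wave_eq: "0 \<le> t \<Longrightarrow> utt t x - uxx t x + V x * u t x + a x * ut t x = 0"
  using solution by blast+

lemma u_init: "u 0 x = u0 x" and ut_init: "ut 0 x = u1 x"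
  using u_init_eq ut_init_eq by blast+

lemmas continuous_on_u [continuous_intros] = continuous_on_compose_curried[OF u_cont]
lemmas continuous_on_ut [continuous_intros] = continuous_on_compose_curried[OF ut_cont]
lemmas continuous_on_ux [continuous_intros] = continuous_on_compose_curried[OF ux_cont]
lemmas continuous_on_utt [continuous_intros] = continuous_on_compose_curried[OF utt_cont]
lemmas continuous_on_utx [continuous_intros] = continuous_on_compose_curried[OF utx_cont]
lemmas continuous_on_uxx [continuous_intros] = continuous_on_compose_curried[OF uxx_cont]

lemma continuous_on_u0 [continuous_intros]: "continuous_on S f \<Longrightarrow> continuous_on S (\<lambda>s. u0 (f s))"
  and continuous_on_u1 [continuous_intros]: "continuous_on S f \<Longrightarrow> continuous_on S (\<lambda>s. u1 (f s))"
  using continuous_on_u[of S "\<lambda>_. 0" f] continuous_on_ut[of S "\<lambda>_. 0" f]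
  by (simp_all add: u_init ut_init)

lemma ux_eq_integral_utx:
  assumes t: "0 \<le> t"
  shows "ux t x = ux 0 x + integral {0..t} (\<lambda>s. utx s x)"
proof -
  define g where "g y = ux 0 y + integral {0..t} (\<lambda>s. utx s y)" for y
  have I_cont: "continuous_on {x-1..x+1} (\<lambda>y. integral {0..t} (\<lambda>s. utx s y))"
    by (rule continuous_on_integral_fst) (use t in \<open>auto intro!: continuous_intros\<close>)
  then have g_cont: "continuous_on {x-1..x+1} g"
    unfolding g_def by (auto intro!: continuous_intros)
  have g_primitive: "integral {x-1..z} g = u t z - u t (x-1)" if z: "z \<in> {x-1..x+1}" for z
  proof -
    have "integral {x-1..z} g = integral {x-1..z} (ux 0) + integral {x-1..z} (\<lambda>y. integral {0..t} (\<lambda>s. utx s y))"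
      unfolding g_def using z continuous_on_subset[OF I_cont, of "{x-1..z}"]
      by (intro integral_add integrable_continuous_real) (auto intro!: continuous_intros)
    also have "integral {x-1..z} (ux 0) = u 0 z - u 0 (x-1)"
      by (rule integral_unique, rule fundamental_theorem_of_calculus_within[where S=UNIV])
        (use z deriv_x_u in auto)
    also have "integral {x-1..z} (\<lambda>y. integral {0..t} (\<lambda>s. utx s y)) = integral {0..t} (\<lambda>s. integral {x-1..z} (utx s))"
      by (rule integral_swap_Icc) (use t in \<open>auto intro!: continuous_intros\<close>)
    also have "\<dots> = integral {0..t} (\<lambda>s. ut s z - ut s (x-1))"
      by (rule integral_cong, rule integral_unique, rule fundamental_theorem_of_calculus_within[where S=UNIV])
        (use z deriv_x_ut in auto)
    also have "\<dots> = (u t z - u t (x-1)) - (u 0 z - u 0 (x-1))"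
      by (rule integral_unique, rule fundamental_theorem_of_calculus_within[where S="{0..}" and f="\<lambda>s. u s z - u s (x-1)"])
        (use t in \<open>auto intro!: derivative_eq_intros deriv_t_u\<close>)
    finally show ?thesis by simp
  qed
  have "((\<lambda>z. integral {x-1..z} g) has_real_derivative g x) (at x within {x-1..x+1})"
    by (rule integral_has_real_derivative[OF g_cont]) auto
  then have "((\<lambda>z. integral {x-1..z} g) has_real_derivative g x) (at x)"
    using at_within_Icc_at[of "x-1" x "x+1"] by simp
  then have "((\<lambda>z. u t z - u t (x-1)) has_real_derivative g x) (at x)"
    by (rule has_field_derivative_transform_within_open[where S="{x-1<..<x+1}"]) (use g_primitive in auto)
  moreover have "((\<lambda>z. u t z - u t (x-1)) has_real_derivative ux t x) (at x)"
    by (auto intro!: derivative_eq_intros deriv_x_u t)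
  ultimately show ?thesis unfolding g_def using DERIV_unique by blast
qed

lemma deriv_t_ux:
  assumes t: "0 \<le> t"
  shows "((\<lambda>s. ux s x) has_real_derivative utx t x) (at t within {0..})"
proof -
  have "((\<lambda>s. integral {0..s} (\<lambda>r. utx r x)) has_real_derivative utx t x) (at t within {0..})"
    by (rule has_real_derivative_integral_upto[OF t]) (auto intro!: continuous_intros)
  then have "((\<lambda>s. ux 0 x + integral {0..s} (\<lambda>r. utx r x)) has_real_derivative utx t x) (at t within {0..})"
    by (auto intro!: derivative_eq_intros)
  then show ?thesis
    by (rule has_field_derivative_transform_within[where d=1])
      (use t in \<open>auto, metis atLeast_iff ux_eq_integral_utx\<close>)
qed

definition edens :: "real \<Rightarrow> real \<Rightarrow> real" where
  "edens t x = energy_density x (u t x) (ut t x) (ux t x)"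

lemma continuous_on_edens [continuous_intros]:
  "continuous_on S f \<Longrightarrow> continuous_on S g \<Longrightarrow> (\<And>s. s \<in> S \<Longrightarrow> 0 \<le> f s) \<Longrightarrow>
    continuous_on S (\<lambda>s. edens (f s) (g s))"
  unfolding edens_def energy_density_def by (auto intro!: continuous_intros)

lemma ux_0_eq_0:
  assumes "R0 < \<bar>x\<bar>"
  shows "ux 0 x = 0"
proof (rule DERIV_eq_0_if_vanishing_on_open[OF deriv_x_u[of 0 x]])
  show "open {y::real. R0 < \<bar>y\<bar>}" by (intro open_Collect_less continuous_intros)
qed (use assms u0_supp u_init in auto)

lemma edens_0_eq_0: "R0 < \<bar>x\<bar> \<Longrightarrow> edens 0 x = 0"
  unfolding edens_def energy_density_def using ux_0_eq_0 u0_supp u1_supp by (simp add: u_init ut_init)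

lemma edens_deriv_t:
  assumes s: "0 \<le> s"
  shows "((\<lambda>s. edens s x) has_real_derivative
      2 * ut s x * utt s x + 2 * ux s x * utx s x + V x * (2 * u s x * ut s x)) (at s within {0..})"
  unfolding edens_def energy_density_def
  by (rule derivative_eq_intros deriv_t_u deriv_t_ut deriv_t_ux refl s | simp add: algebra_simps)+

lemma cone_density_deriv_t:
  assumes s: "0 \<le> s"
  shows "((\<lambda>s. neg_sq (c + s - T) * edens s x) has_real_derivative
      2 * min (c + s - T) 0 * edens s x + neg_sq (c + s - T) *
      (2 * ut s x * utt s x + 2 * ux s x * utx s x + V x * (2 * u s x * ut s x))) (at s within {0..})"
proof -
  have "((\<lambda>s. c + s - T) has_real_derivative 1) (at s within {0..})"
    by (auto intro!: derivative_eq_intros)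
  from DERIV_mult[OF neg_sq_chain[OF this] edens_deriv_t[OF s]] show ?thesis
    by (simp add: algebra_simps)
qed

lemma cone_flux_deriv_x:
  assumes s: "0 \<le> s"
  shows "((\<lambda>y. -2 * neg_sq (sqrt ((y - x1)^2 + 1) + s - T) * ut s y * ux s y) has_real_derivative
     -2 * (2 * min (sqrt ((x - x1)^2 + 1) + s - T) 0 * ((x - x1) / sqrt ((x - x1)^2 + 1)) * ut s x * ux s x
      + neg_sq (sqrt ((x - x1)^2 + 1) + s - T) * (utx s x * ux s x + ut s x * uxx s x))) (at x)"
  apply (rule has_real_derivative_sqrt_dist derivative_eq_intros deriv_x_u deriv_x_ut deriv_x_ux refl s)+
  apply (simp only: mult_zero_left add_0_left diff_0_right add_0_right)
  apply (simp only: algebra_simps)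
  done

lemma cone_divergence_nonpos:
  assumes s: "0 \<le> s" and \<rho>: "\<bar>\<rho>\<bar> \<le> 1"
  shows "2 * min c 0 * edens s x + neg_sq c * (2 * ut s x * utt s x + 2 * ux s x * utx s x + V x * (2 * u s x * ut s x))
       + -2 * (2 * min c 0 * \<rho> * ut s x * ux s x + neg_sq c * (utx s x * ux s x + ut s x * uxx s x)) \<le> 0"
proof -
  have utt: "utt s x = uxx s x - V x * u s x - a x * ut s x" using wave_eq[OF s, of x] by simp
  have "2 * min c 0 * (energy_density x (u s x) (ut s x) (ux s x) - 2 * \<rho> * ut s x * ux s x)
      - 2 * neg_sq c * a x * (ut s x)^2 \<le> 0"
    using \<rho> by (intro cone_flux_nonpos neg_sq_nonneg) auto
  then show ?thesis
    unfolding edens_def energy_density_def utt by (simp add: algebra_simps power2_eq_square)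
qed

text \<open>Finite speed of propagation: the energy weighted by \<open>neg_sq (r x + s - T)\<close>, with
  \<open>r x = sqrt ((x - x1)\<^sup>2 + 1)\<close>, lives in a (smoothed) backward light cone with apex near
  \<open>(T, x1)\<close> and does not increase in time; if the cone misses the initial support, it vanishes.\<close>
lemma cone_energy_antimono:
  assumes T: "0 \<le> T" and t: "0 \<le> t"
  shows "integral {x1-T-1..x1+T+1} (\<lambda>x. neg_sq (sqrt ((x - x1)^2 + 1) + t - T) * edens t x)
       \<le> integral {x1-T-1..x1+T+1} (\<lambda>x. neg_sq (sqrt ((x - x1)^2 + 1) - T) * edens 0 x)"
proof -
  define r where "r x = sqrt ((x - x1)^2 + 1)" for x
  define c d where "c = x1 - T - 1" and "d = x1 + T + 1"
  define A where "A s x = neg_sq (r x + s - T) * edens s x" for s x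
  define A' where "A' s x = 2 * min (r x + s - T) 0 * edens s x + neg_sq (r x + s - T) *
      (2 * ut s x * utt s x + 2 * ux s x * utx s x + V x * (2 * u s x * ut s x))" for s x
  define B where "B s x = -2 * neg_sq (r x + s - T) * ut s x * ux s x" for s x
  define B' where "B' s x = -2 * (2 * min (r x + s - T) 0 * ((x - x1) / r x) * ut s x * ux s x
      + neg_sq (r x + s - T) * (utx s x * ux s x + ut s x * uxx s x))" for s x
  have r_ge: "\<bar>x - x1\<bar> \<le> r x" for x
    unfolding r_def by (rule abs_le_sqrt_sq_plus_1)
  have cd: "c \<le> d" unfolding c_def d_def using T by simp
  have A'_cont: "continuous_on ({0..t} \<times> {c..d}) (\<lambda>p. A' (fst p) (snd p))"
    unfolding A'_def r_def by (auto intro!: continuous_intros)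
  have A_0_cont: "continuous_on {c..d} (A 0)"
    unfolding A_def r_def by (auto intro!: continuous_intros)
  have B_ends: "B s c = 0" "B s d = 0" if "s \<in> {0..t}" for s
    using that r_ge[of c] r_ge[of d] unfolding B_def c_def d_def by (auto simp: neg_sq_eq_0)
  note balance = balance_law_integral[where U="{0..}" and A=A and A'=A' and B=B and B'=B'
      and G="\<lambda>s x. A' s x + B' s x", OF t _ cd _ _ A'_cont A_0_cont B_ends]
  have balance_eq: "integral {c..d} (A t) - integral {c..d} (A 0)
      = integral {0..t} (\<lambda>s. integral {c..d} (\<lambda>x. A' s x + B' s x))"
    and integrable: "(\<lambda>s. integral {c..d} (\<lambda>x. A' s x + B' s x)) integrable_on {0..t}"
    and integrable_inner: "\<And>s. s \<in> {0..t} \<Longrightarrow> (\<lambda>x. A' s x + B' s x) integrable_on {c..d}"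
    using balance cone_density_deriv_t cone_flux_deriv_x unfolding A_def A'_def B_def B'_def r_def
    by auto
  have "A' s x + B' s x \<le> 0" if "0 \<le> s" for s x
  proof -
    have "0 < r x" unfolding r_def by (simp add: add_nonneg_pos)
    then have "\<bar>(x - x1) / r x\<bar> \<le> 1"
      using r_ge[of x] by (simp add: abs_divide divide_le_eq_1)
    with that show ?thesis unfolding A'_def B'_def by (rule cone_divergence_nonpos)
  qed
  then have "integral {0..t} (\<lambda>s. integral {c..d} (\<lambda>x. A' s x + B' s x)) \<le> 0"
    using integrable integrable_inner by (intro integral_nonpos) (auto intro!: integral_nonpos)
  with balance_eq show ?thesis unfolding A_def r_def c_def d_def by simp
qed

lemma cone_energy_eq_0:
  assumes T: "0 \<le> T" and x1: "R0 + T < \<bar>x1\<bar>" and t: "0 \<le> t"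
  shows "integral {x1-T-1..x1+T+1} (\<lambda>x. neg_sq (sqrt ((x - x1)^2 + 1) + t - T) * edens t x) = 0"
proof -
  have zero: "neg_sq (sqrt ((x - x1)^2 + 1) - T) * edens 0 x = 0" for x
  proof (cases "0 \<le> sqrt ((x - x1)^2 + 1) - T")
    case False
    then have "R0 < \<bar>x\<bar>" using abs_le_sqrt_sq_plus_1[of "x - x1"] x1 by linarith
    then show ?thesis by (simp add: edens_0_eq_0)
  qed (simp add: neg_sq_eq_0)
  then have "integral {x1-T-1..x1+T+1} (\<lambda>x. neg_sq (sqrt ((x - x1)^2 + 1) + t - T) * edens t x) \<le> 0"
    using cone_energy_antimono[OF T t, of x1] by (simp only: zero integral_0)
  moreover have "continuous_on {x1-T-1..x1+T+1} (\<lambda>x. neg_sq (sqrt ((x - x1)^2 + 1) + t - T) * edens t x)"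
    using t by (auto intro!: continuous_intros)
  then have "0 \<le> integral {x1-T-1..x1+T+1} (\<lambda>x. neg_sq (sqrt ((x - x1)^2 + 1) + t - T) * edens t x)"
    by (intro integral_nonneg integrable_continuous_real)
      (simp_all add: neg_sq_nonneg edens_def energy_density_nonneg)
  ultimately show ?thesis by simp
qed

lemma ut_eq_0_outside_cone:
  assumes t: "0 \<le> t" and x: "R0 + t + 1 < \<bar>x\<bar>"
  shows "ut t x = 0"
proof -
  define T where "T = (t + 1 + (\<bar>x\<bar> - R0)) / 2"
  have T: "0 \<le> T" "R0 + T < \<bar>x\<bar>" "t < T - 1" unfolding T_def using t x by (auto simp: field_simps)
  define w where "w y = neg_sq (sqrt ((y - x)^2 + 1) + t - T) * edens t y" for y
  have w_cont: "continuous_on {x-T-1..x+T+1} w"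
    unfolding w_def using t by (auto intro!: continuous_intros)
  have "(w has_integral 0) {x-T-1..x+T+1}"
    using cone_energy_eq_0[OF T(1,2) t] integrable_continuous_real[OF w_cont]
    unfolding w_def by (simp add: has_integral_integrable_integral)
  moreover have "0 \<le> w y" for y
    unfolding w_def edens_def by (simp add: neg_sq_nonneg energy_density_nonneg)
  ultimately have "w x = 0"
    using w_cont T by (intro has_integral_0_cbox_imp_0[of "x-T-1" "x+T+1" w x]) auto
  moreover have "0 < neg_sq (1 + t - T)" using T by (intro neg_sq_pos) simp
  ultimately have "edens t x = 0" unfolding w_def by simp
  then show ?thesis using energy_density_ge(1)[of "ut t x" x "u t x" "ux t x"] by (simp add: edens_def)
qed

lemma u_eq_0_outside_cone:
  assumes t: "0 \<le> t" and x: "R0 + t + 1 < \<bar>x\<bar>"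
  shows "u t x = 0"
proof -
  have "((\<lambda>s. ut s x) has_integral (u t x - u 0 x)) {0..t}"
    by (rule fundamental_theorem_of_calculus_within[OF t, where S="{0..}"]) (use deriv_t_u in auto)
  moreover have "ut s x = 0" if "s \<in> {0..t}" for s
    using that x by (intro ut_eq_0_outside_cone) auto
  then have "((\<lambda>s. ut s x) has_integral 0) {0..t}"
    by (intro has_integral_eq[OF _ has_integral_0]) simp
  ultimately have "u t x - u 0 x = 0" by (rule has_integral_unique)
  then show ?thesis using u_init[of x] u0_supp[of x] x R0_nonneg t by simp
qed

lemma ux_eq_0_outside_cone:
  assumes t: "0 \<le> t" and x: "R0 + t + 1 < \<bar>x\<bar>"
  shows "ux t x = 0"
proof (rule DERIV_eq_0_if_vanishing_on_open[OF deriv_x_u[OF t, of x]])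
  show "open {y::real. R0 + t + 1 < \<bar>y\<bar>}" by (intro open_Collect_less continuous_intros)
  show "u t y = 0" if "y \<in> {y. R0 + t + 1 < \<bar>y\<bar>}" for y
    using that t by (intro u_eq_0_outside_cone) auto
qed (use x in simp)

end

section \<open>Integral identities up to time \<open>T\<close>\<close>

locale damped_wave_horizon = damped_wave +
  fixes T :: real
  assumes T_nonneg: "0 \<le> T"
begin

text \<open>Up to time \<open>T\<close> all integrals are taken over \<open>[-R, R]\<close>, which contains the support of the
  solution and the interval \<open>[-(L+1), L+2]\<close> used by the Poincare inequality.\<close>
definition R :: real where
  "R = R0 + T + L + 4"

lemma R_gt: "R0 + T + 1 < R" "L + 2 < R"
  unfolding R_def using R0_nonneg T_nonneg L_pos by auto

lemma solution_vanishes_at_ends: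
  assumes "t \<in> {0..T}" "x = R \<or> x = -R"
  shows "u t x = 0" "ut t x = 0" "ux t x = 0"
  using assms R_gt u_eq_0_outside_cone ut_eq_0_outside_cone ux_eq_0_outside_cone by auto

definition energy :: "real \<Rightarrow> real" where
  "energy t = integral {-R..R} (edens t)"

lemma integrable_edens: "0 \<le> t \<Longrightarrow> edens t integrable_on {-R..R}"
  by (intro integrable_continuous_real) (auto intro!: continuous_intros)

lemma energy_nonneg: "0 \<le> t \<Longrightarrow> 0 \<le> energy t"
  unfolding energy_def
  by (intro integral_nonneg integrable_edens) (simp_all add: edens_def energy_density_nonneg)

lemma energy_identity:
  assumes "0 \<le> S" "S \<le> t" "t \<le> T"
  shows "energy t - energy S = integral {S..t} (\<lambda>s. integral {-R..R} (\<lambda>x. -2 * a x * (ut s x)^2))"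
    and "(\<lambda>s. integral {-R..R} (\<lambda>x. -2 * a x * (ut s x)^2)) integrable_on {S..t}"
proof -
  define A' where "A' s x = 2 * ut s x * utt s x + 2 * ux s x * utx s x + V x * (2 * u s x * ut s x)" for s x
  define B where "B s x = -2 * ut s x * ux s x" for s x
  define B' where "B' s x = -2 * (utx s x * ux s x + ut s x * uxx s x)" for s x
  have B_deriv: "((\<lambda>y. B s y) has_real_derivative B' s x) (at x)" if "s \<in> {S..t}" for s x
  proof -
    have s: "0 \<le> s" using that assms by auto
    show ?thesis unfolding B_def B'_def
      by (rule derivative_eq_intros deriv_x_u deriv_x_ut deriv_x_ux refl s | simp add: algebra_simps)+
  qed
  have "-2 * a x * (ut s x)^2 = A' s x + B' s x" if "s \<in> {S..t}" for s x
  proof -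
    have utt: "utt s x = uxx s x - V x * u s x - a x * ut s x" using wave_eq[of s x] that assms by simp
    show ?thesis unfolding A'_def B'_def utt by (simp add: algebra_simps power2_eq_square)
  qed
  moreover have "continuous_on ({S..t} \<times> {-R..R}) (\<lambda>p. A' (fst p) (snd p))"
    unfolding A'_def using assms by (auto intro!: continuous_intros)
  moreover have "continuous_on {-R..R} (edens S)"
    using assms by (auto intro!: continuous_intros)
  moreover have "B s (-R) = 0" "B s R = 0" if "s \<in> {S..t}" for s
    unfolding B_def using solution_vanishes_at_ends[of s] that assms by auto
  moreover have "R0 + T + 1 < R" by (rule R_gt)
  ultimately show "energy t - energy S = integral {S..t} (\<lambda>s. integral {-R..R} (\<lambda>x. -2 * a x * (ut s x)^2))"
    and "(\<lambda>s. integral {-R..R} (\<lambda>x. -2 * a x * (ut s x)^2)) integrable_on {S..t}"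
    using balance_law_integral[where U="{0..}" and A=edens and A'=A' and B=B and B'=B'
        and G="\<lambda>s x. -2 * a x * (ut s x)^2" and c="-R" and d=R, OF assms(2)]
      edens_deriv_t B_deriv assms R0_nonneg
    unfolding energy_def A'_def by auto
qed

lemma energy_antimono:
  assumes "0 \<le> s" "s \<le> t" "t \<le> T"
  shows "energy t \<le> energy s"
proof -
  note E = energy_identity[OF assms]
  have "integral {-R..R} (\<lambda>x. -2 * a x * (ut r x)^2) \<le> 0" if "r \<in> {s..t}" for r
    using that assms a_nonneg by (intro integral_nonpos integrable_continuous_real) (auto intro!: continuous_intros)
  then have "integral {s..t} (\<lambda>r. integral {-R..R} (\<lambda>x. -2 * a x * (ut r x)^2)) \<le> 0"
    by (rule integral_nonpos[OF E(2)])
  then show ?thesis using E(1) by simp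
qed

definition st_integral :: "(real \<Rightarrow> real \<Rightarrow> real) \<Rightarrow> real" where
  "st_integral g = integral {0..T} (\<lambda>s. integral {-R..R} (g s))"

abbreviation st_continuous :: "(real \<Rightarrow> real \<Rightarrow> real) \<Rightarrow> bool" where
  "st_continuous g \<equiv> continuous_on ({0..T} \<times> {-R..R}) (\<lambda>p. g (fst p) (snd p))"

lemma st_integrable:
  assumes "st_continuous g"
  shows "(\<lambda>s. integral {-R..R} (g s)) integrable_on {0..T}"
    and "s \<in> {0..T} \<Longrightarrow> g s integrable_on {-R..R}"
  using assms by (auto intro!: integrable_continuous_real continuous_on_integral_snd continuous_on_slice)

lemma st_integral_add: "st_continuous g \<Longrightarrow> st_continuous h \<Longrightarrow> st_integral (\<lambda>s x. g s x + h s x) = st_integral g + st_integral h"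
  unfolding st_integral_def
  by (subst integral_add[symmetric], (auto intro!: st_integrable)[2], rule integral_cong)
    (auto intro!: integral_add st_integrable)

lemma st_integral_cmult: "st_integral (\<lambda>s x. k * g s x) = k * st_integral g"
  unfolding st_integral_def by simp

lemma st_integral_mono:
  assumes "st_continuous g" "st_continuous h" "\<And>s x. s \<in> {0..T} \<Longrightarrow> x \<in> {-R..R} \<Longrightarrow> g s x \<le> h s x"
  shows "st_integral g \<le> st_integral h"
  unfolding st_integral_def using assms by (intro integral_le st_integrable) auto

lemma st_integral_nonneg:
  assumes "st_continuous g" "\<And>s x. s \<in> {0..T} \<Longrightarrow> x \<in> {-R..R} \<Longrightarrow> 0 \<le> g s x"
  shows "0 \<le> st_integral g"
  using st_integral_mono[of "\<lambda>s x. 0" g] assms by (simp add: st_integral_def)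

lemma st_integral_cong:
  "(\<And>s x. s \<in> {0..T} \<Longrightarrow> x \<in> {-R..R} \<Longrightarrow> g s x = h s x) \<Longrightarrow> st_integral g = st_integral h"
  unfolding st_integral_def by (intro integral_cong) auto

lemma st_integral_lincomb6:
  assumes "st_continuous g1" "st_continuous g2" "st_continuous g3" "st_continuous g4" "st_continuous g5" "st_continuous g6"
  shows "st_integral (\<lambda>s x. k1 * g1 s x + k2 * g2 s x + k3 * g3 s x + k4 * g4 s x + k5 * g5 s x + k6 * g6 s x)
       = k1 * st_integral g1 + k2 * st_integral g2 + k3 * st_integral g3 + k4 * st_integral g4 + k5 * st_integral g5 + k6 * st_integral g6"
  using assms by (simp add: st_integral_add st_integral_cmult continuous_intros)

lemma st_integral_edens_ge: "T * energy T \<le> st_integral edens"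
proof -
  have "energy integrable_on {0..T}"
    unfolding energy_def by (rule st_integrable(1)) (auto intro!: continuous_intros)
  then have "integral {0..T} (\<lambda>s. energy T) \<le> integral {0..T} energy"
    using energy_antimono T_nonneg
    by (intro integral_le[OF integrable_continuous_real[OF continuous_on_const]]) auto
  then show ?thesis using T_nonneg unfolding st_integral_def energy_def by simp
qed

lemma st_integral_a_ut_le: "st_integral (\<lambda>s x. a x * (ut s x)^2) \<le> energy 0 / 2"
proof -
  have "energy T - energy 0 = -2 * st_integral (\<lambda>s x. a x * (ut s x)^2)"
    using energy_identity(1)[OF order_refl T_nonneg order_refl]
    by (simp add: st_integral_def mult.assoc flip: st_integral_cmult)
  then show ?thesis using energy_nonneg[OF T_nonneg] by simp
qed

definition equipartition_term :: "real \<Rightarrow> real" where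
  "equipartition_term t = integral {-R..R} (\<lambda>x. 2 * u t x * ut t x + a x * (u t x)^2)"

lemma st_integral_equipartition_density:
  "st_integral (\<lambda>s x. equipartition_density x (u s x) (ut s x) (ux s x))
     = equipartition_term T - equipartition_term 0"
proof -
  define A where "A s x = 2 * u s x * ut s x + a x * (u s x)^2" for s x
  define A' where "A' s x = 2 * ut s x * ut s x + 2 * u s x * utt s x + a x * (2 * u s x * ut s x)" for s x
  define B where "B s x = -2 * u s x * ux s x" for s x
  define B' where "B' s x = -2 * (ux s x * ux s x + u s x * uxx s x)" for s x
  have A_deriv: "((\<lambda>s. A s x) has_real_derivative A' s x) (at s within {0..})" if "s \<in> {0..T}" for s x
  proof -
    have s: "0 \<le> s" using that by simp
    show ?thesis unfolding A_def A'_def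
      by (rule derivative_eq_intros deriv_t_u deriv_t_ut refl s | simp add: algebra_simps)+
  qed
  have B_deriv: "((\<lambda>y. B s y) has_real_derivative B' s x) (at x)" if "s \<in> {0..T}" for s x
  proof -
    have s: "0 \<le> s" using that by simp
    show ?thesis unfolding B_def B'_def
      by (rule derivative_eq_intros deriv_x_u deriv_x_ux refl s | simp add: algebra_simps)+
  qed
  have "equipartition_density x (u s x) (ut s x) (ux s x) = A' s x + B' s x" if "s \<in> {0..T}" for s x
  proof -
    have utt: "utt s x = uxx s x - V x * u s x - a x * ut s x" using wave_eq[of s x] that by simp
    show ?thesis unfolding equipartition_density_def A'_def B'_def utt by (simp add: algebra_simps power2_eq_square)
  qed
  moreover have "continuous_on ({0..T} \<times> {-R..R}) (\<lambda>p. A' (fst p) (snd p))"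
    unfolding A'_def by (auto intro!: continuous_intros)
  moreover have "continuous_on {-R..R} (A 0)"
    unfolding A_def by (auto intro!: continuous_intros)
  moreover have "B s (-R) = 0" "B s R = 0" if "s \<in> {0..T}" for s
    unfolding B_def using solution_vanishes_at_ends[of s] that by auto
  moreover have "R0 + T + 1 < R" by (rule R_gt)
  ultimately show ?thesis
    using balance_law_integral[where U="{0..}" and A=A and A'=A' and B=B and B'=B'
        and G="\<lambda>s x. equipartition_density x (u s x) (ut s x) (ux s x)" and c="-R" and d=R, OF T_nonneg]
      A_deriv B_deriv R0_nonneg T_nonneg
    unfolding st_integral_def equipartition_term_def A_def by auto
qed

definition morawetz_term :: "real \<Rightarrow> real" where
  "morawetz_term t = integral {-R..R} (\<lambda>x. 2 * \<mu> x * ut t x * ux t x)"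

lemma st_integral_morawetz_density:
  "st_integral (\<lambda>s x. morawetz_density x (u s x) (ut s x) (ux s x)) = morawetz_term T - morawetz_term 0"
proof -
  define A where "A s x = 2 * \<mu> x * ut s x * ux s x" for s x
  define A' where "A' s x = 2 * \<mu> x * (utt s x * ux s x + ut s x * utx s x)" for s x
  define B where "B s x = - \<mu> x * ((ut s x)^2 + (ux s x)^2) + \<mu> x * V x * (u s x)^2" for s x
  define B' where "B' s x = - \<mu>' x * ((ut s x)^2 + (ux s x)^2) - \<mu> x * (2 * ut s x * utx s x + 2 * ux s x * uxx s x)
     + (\<mu>' x * V x + \<mu> x * deriv V x) * (u s x)^2 + \<mu> x * V x * (2 * u s x * ux s x)" for s x
  have A_deriv: "((\<lambda>s. A s x) has_real_derivative A' s x) (at s within {0..})" if "s \<in> {0..T}" for s x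
  proof -
    have s: "0 \<le> s" using that by simp
    show ?thesis unfolding A_def A'_def
      by (rule derivative_eq_intros deriv_t_ut deriv_t_ux refl s | simp add: algebra_simps)+
  qed
  have B_deriv: "((\<lambda>y. B s y) has_real_derivative B' s x) (at x)" if "s \<in> {0..T}" for s x
  proof -
    have s: "0 \<le> s" using that by simp
    show ?thesis unfolding B_def B'_def
      by (rule derivative_eq_intros \<mu>_has_real_derivative V_deriv deriv_x_u deriv_x_ut deriv_x_ux refl s)+
        (simp add: algebra_simps power2_eq_square)
  qed
  have "morawetz_density x (u s x) (ut s x) (ux s x) = A' s x + B' s x" if "s \<in> {0..T}" for s x
  proof -
    have utt: "utt s x = uxx s x - V x * u s x - a x * ut s x" using wave_eq[of s x] that by simp
    show ?thesis unfolding morawetz_density_def A'_def B'_def utt by (simp add: algebra_simps power2_eq_square)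
  qed
  moreover have "continuous_on ({0..T} \<times> {-R..R}) (\<lambda>p. A' (fst p) (snd p))"
    unfolding A'_def by (auto intro!: continuous_intros)
  moreover have "continuous_on {-R..R} (A 0)"
    unfolding A_def by (auto intro!: continuous_intros)
  moreover have "B s (-R) = 0" "B s R = 0" if "s \<in> {0..T}" for s
    unfolding B_def using solution_vanishes_at_ends[of s] that by auto
  moreover have "R0 + T + 1 < R" by (rule R_gt)
  ultimately show ?thesis
    using balance_law_integral[where U="{0..}" and A=A and A'=A' and B=B and B'=B'
        and G="\<lambda>s x. morawetz_density x (u s x) (ut s x) (ux s x)" and c="-R" and d=R, OF T_nonneg]
      A_deriv B_deriv R0_nonneg T_nonneg
    unfolding st_integral_def morawetz_term_def A_def by auto
qed

text \<open>The time primitive \<open>W = \<integral>\<^sub>0\<^sup>t u\<close> solves the damped wave equation with the stationary source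
  \<open>u1 + a u0\<close>; its energy identity controls \<open>\<parallel>u(T)\<parallel>\<^sup>2\<close> and \<open>\<integral>\<integral> a u\<^sup>2\<close>.\<close>
definition W :: "real \<Rightarrow> real \<Rightarrow> real" where
  "W t x = integral {0..t} (\<lambda>s. u s x)"

definition Wx :: "real \<Rightarrow> real \<Rightarrow> real" where
  "Wx t x = integral {0..t} (\<lambda>s. ux s x)"

lemma W_deriv_t: "0 \<le> t \<Longrightarrow> ((\<lambda>s. W s x) has_real_derivative u t x) (at t within {0..})"
  and Wx_deriv_t: "0 \<le> t \<Longrightarrow> ((\<lambda>s. Wx s x) has_real_derivative ux t x) (at t within {0..})"
  unfolding W_def Wx_def by (auto intro!: has_real_derivative_integral_upto continuous_intros)

lemma Wx_deriv_x:
  assumes t: "0 \<le> t"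
  shows "((\<lambda>y. Wx t y) has_real_derivative
     ut t x - u1 x + V x * W t x + a x * (u t x - u0 x)) (at x)"
proof -
  have "((\<lambda>y. integral (cbox 0 t) (\<lambda>s. ux s y)) has_field_derivative integral (cbox 0 t) (\<lambda>s. uxx s x))
      (at x within UNIV)"
  proof (rule leibniz_rule_field_derivative)
    show "((\<lambda>y. ux s y) has_field_derivative uxx s y) (at y within UNIV)" if "s \<in> cbox 0 t" for y s
      using that deriv_x_ux by auto
    show "(\<lambda>s. ux s y) integrable_on cbox 0 t" for y
      by (simp, rule integrable_continuous_real) (auto intro!: continuous_intros)
    have "continuous_on (UNIV \<times> cbox 0 t) (\<lambda>p. uxx (snd p) (fst p))"
      by (auto intro!: continuous_intros)
    then show "continuous_on (UNIV \<times> cbox 0 t) (\<lambda>(y, s). uxx s y)"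
      by (simp add: case_prod_beta)
  qed auto
  moreover have "((\<lambda>s. uxx s x) has_integral ut t x - u1 x + V x * W t x + a x * (u t x - u0 x)) {0..t}"
  proof -
    have "((\<lambda>s. utt s x) has_integral (ut t x - ut 0 x)) {0..t}"
      by (rule fundamental_theorem_of_calculus_within[OF t, where S="{0..}"]) (use deriv_t_ut in auto)
    moreover have "((\<lambda>s. u s x) has_integral W t x) {0..t}"
      unfolding W_def by (rule integrable_integral, rule integrable_continuous_real) (auto intro!: continuous_intros)
    moreover have "((\<lambda>s. ut s x) has_integral (u t x - u 0 x)) {0..t}"
      by (rule fundamental_theorem_of_calculus_within[OF t, where S="{0..}"]) (use deriv_t_u in auto)
    ultimately have "((\<lambda>s. utt s x + V x * u s x + a x * ut s x) has_integral
        (ut t x - ut 0 x) + V x * W t x + a x * (u t x - u 0 x)) {0..t}"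
      by (intro has_integral_add has_integral_mult_right)
    moreover have "utt s x + V x * u s x + a x * ut s x = uxx s x" if "s \<in> {0..t}" for s
      using wave_eq[of s x] that by (simp add: algebra_simps)
    ultimately have "((\<lambda>s. uxx s x) has_integral
        (ut t x - ut 0 x) + V x * W t x + a x * (u t x - u 0 x)) {0..t}"
      by (rule has_integral_eq[rotated])
    then show ?thesis by (simp add: u_init ut_init algebra_simps)
  qed
  ultimately show ?thesis unfolding Wx_def by (simp add: integral_unique)
qed

lemma continuous_on_W_Wx: "continuous_on ({0..T} \<times> UNIV) (\<lambda>(t, x). W t x)"
  "continuous_on ({0..T} \<times> UNIV) (\<lambda>(t, x). Wx t x)"
  unfolding W_def Wx_def by (auto intro!: continuous_on_integral_upto continuous_intros)

lemmas continuous_on_W [continuous_intros] = continuous_on_compose_curried[OF continuous_on_W_Wx(1)]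
lemmas continuous_on_Wx [continuous_intros] = continuous_on_compose_curried[OF continuous_on_W_Wx(2)]

lemma primitive_energy_identity:
  "integral {-R..R} (\<lambda>x. (u T x)^2 + (Wx T x)^2 + V x * (W T x)^2 - 2 * (u1 x + a x * u0 x) * W T x)
     - integral {-R..R} (\<lambda>x. (u0 x)^2)
   = - 2 * st_integral (\<lambda>s x. a x * (u s x)^2)"
proof -
  define A where "A s x = (u s x)^2 + (Wx s x)^2 + V x * (W s x)^2 - 2 * (u1 x + a x * u0 x) * W s x" for s x
  define A' where "A' s x = 2 * u s x * ut s x + 2 * Wx s x * ux s x + V x * (2 * W s x * u s x)
     - 2 * (u1 x + a x * u0 x) * u s x" for s x
  define B where "B s x = -2 * u s x * Wx s x" for s x
  define B' where "B' s x = -2 * (ux s x * Wx s x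
     + u s x * (ut s x - u1 x + V x * W s x + a x * (u s x - u0 x)))" for s x
  have A_deriv: "((\<lambda>s. A s x) has_real_derivative A' s x) (at s within {0..})" if "s \<in> {0..T}" for s x
  proof -
    have s: "0 \<le> s" using that by simp
    show ?thesis unfolding A_def A'_def
      by (rule derivative_eq_intros deriv_t_u W_deriv_t Wx_deriv_t refl s | simp add: algebra_simps)+
  qed
  have B_deriv: "((\<lambda>y. B s y) has_real_derivative B' s x) (at x)" if "s \<in> {0..T}" for s x
  proof -
    have s: "0 \<le> s" using that by simp
    show ?thesis unfolding B_def B'_def
      by (rule derivative_eq_intros deriv_x_u Wx_deriv_x refl s | simp add: algebra_simps)+
  qed
  have G: "-2 * (a x * (u s x)^2) = A' s x + B' s x" for s x
    unfolding A'_def B'_def by (simp add: algebra_simps power2_eq_square)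
  have A'_cont: "continuous_on ({0..T} \<times> {-R..R}) (\<lambda>p. A' (fst p) (snd p))"
    unfolding A'_def by (auto intro!: continuous_intros)
  have A_0: "A 0 = (\<lambda>x. (u0 x)^2)"
    unfolding A_def W_def Wx_def by (simp add: u_init)
  have A_0_cont: "continuous_on {-R..R} (A 0)"
    unfolding A_0 by (auto intro!: continuous_intros)
  have B_ends: "B s (-R) = 0" "B s R = 0" if "s \<in> {0..T}" for s
    unfolding B_def using solution_vanishes_at_ends[of s] that by auto
  have "-R \<le> R" using R_gt R0_nonneg T_nonneg by simp
  from balance_law_integral(1)[where U="{0..}" and G="\<lambda>s x. -2 * (a x * (u s x)^2)",
      OF T_nonneg _ this A_deriv B_deriv A'_cont A_0_cont B_ends G]
  have "integral {-R..R} (A T) - integral {-R..R} (A 0) = st_integral (\<lambda>s x. -2 * (a x * (u s x)^2))"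
    unfolding st_integral_def by simp
  then show ?thesis unfolding st_integral_cmult A_0 by (simp only: A_def[abs_def])
qed

abbreviation I0 :: real where
  "I0 \<equiv> I0sq a V u0 u1"

definition l2sq :: "(real \<Rightarrow> real) \<Rightarrow> real" where
  "l2sq h = integral {-R..R} (\<lambda>x. (h x)^2)"

lemma l2sq_nonneg: "continuous_on {-R..R} h \<Longrightarrow> 0 \<le> l2sq h"
  unfolding l2sq_def by (intro integral_nonneg integrable_continuous_real) (auto intro!: continuous_intros)

lemma continuous_on_source [continuous_intros]:
  "continuous_on S f \<Longrightarrow> continuous_on S (\<lambda>s. (u1 (f s) + a (f s) * u0 (f s)) / sqrt (V (f s)))"
  using V_pos by (auto intro!: continuous_intros simp: less_imp_neq[symmetric])

lemma I0sq_eq: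
  "I0 = l2sq u0 + l2sq (ux 0) + l2sq u1 + l2sq (\<lambda>x. (u1 x + a x * u0 x) / sqrt (V x))"
proof -
  have "deriv u0 x = ux 0 x" for x
    using deriv_x_u[of 0 x] by (simp add: u_init DERIV_imp_deriv)
  moreover have lint: "(LINT x|lborel. (h x)^2) = l2sq h"
    if "continuous_on UNIV h" "\<And>x. R0 < \<bar>x\<bar> \<Longrightarrow> h x = 0" for h
    unfolding l2sq_def using that R_gt T_nonneg
    by (intro lebesgue_integral_eq_integral_Icc) (auto intro!: continuous_intros)
  ultimately show ?thesis
    unfolding I0sq_def using u0_supp u1_supp ux_0_eq_0
    by (simp add: lint continuous_intros)
qed

lemma l2sq_data_nonneg:
  "0 \<le> l2sq u0" "0 \<le> l2sq (ux 0)" "0 \<le> l2sq u1" "0 \<le> l2sq (\<lambda>x. (u1 x + a x * u0 x) / sqrt (V x))"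
  by (auto intro!: l2sq_nonneg continuous_intros)

lemma energy_0_le: "energy 0 \<le> c_init * I0"
proof -
  have "energy 0 \<le> integral {-R..R} (\<lambda>x. (ux 0 x)^2 + (u1 x)^2 + Vmax * (u0 x)^2)"
    unfolding energy_def
  proof (rule integral_le)
    show "edens 0 x \<le> (ux 0 x)^2 + (u1 x)^2 + Vmax * (u0 x)^2" for x
      unfolding edens_def energy_density_def u_init ut_init using V_le[of x] by (simp add: mult_right_mono)
  qed (auto intro!: integrable_continuous_real continuous_intros)
  also have "\<dots> = l2sq (ux 0) + l2sq u1 + Vmax * l2sq u0"
    unfolding l2sq_def by (subst integral_add integral_mult, auto intro!: integrable_continuous_real continuous_intros)+
  also have "\<dots> \<le> I0 + Vmax * I0"
  proof -
    have "l2sq u0 \<le> I0" using l2sq_data_nonneg I0sq_eq by linarith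
    then have "Vmax * l2sq u0 \<le> Vmax * I0" by (rule mult_left_mono[OF _ Vmax_nonneg])
    then show ?thesis using l2sq_data_nonneg I0sq_eq by linarith
  qed
  also have "\<dots> \<le> c_init * I0"
  proof -
    have "0 \<le> I0" using l2sq_data_nonneg I0sq_eq by linarith
    then show ?thesis
      using mult_nonneg_nonneg[OF A_nonneg \<open>0 \<le> I0\<close>] unfolding c_init_def ring_distribs by linarith
  qed
  finally show ?thesis .
qed

lemma equipartition_term_0_le: "equipartition_term 0 \<le> c_init * I0"
proof -
  have "equipartition_term 0 \<le> integral {-R..R} (\<lambda>x. (1 + A) * (u0 x)^2 + (u1 x)^2)"
    unfolding equipartition_term_def
  proof (rule integral_le)
    show "2 * u 0 x * ut 0 x + a x * (u 0 x)^2 \<le> (1 + A) * (u0 x)^2 + (u1 x)^2" for x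
      using zero_le_power2[of "u0 x - u1 x"] mult_right_mono[OF a_le[of x] zero_le_power2[of "u0 x"]]
      unfolding u_init ut_init by (simp add: power2_eq_square algebra_simps)
  qed (auto intro!: integrable_continuous_real continuous_intros)
  also have "\<dots> = (1 + A) * l2sq u0 + l2sq u1"
    unfolding l2sq_def by (subst integral_add) (auto intro!: integrable_continuous_real continuous_intros)
  also have "\<dots> \<le> c_init * I0"
    using l2sq_data_nonneg A_nonneg Vmax_nonneg unfolding c_init_def I0sq_eq
    by (simp add: algebra_simps mult_left_mono add_mono)
  finally show ?thesis .
qed

lemma equipartition_term_T_ge: "- equipartition_term T \<le> l2sq (u T) + energy T"
proof -
  have "- equipartition_term T = integral {-R..R} (\<lambda>x. - (2 * u T x * ut T x + a x * (u T x)^2))"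
    unfolding equipartition_term_def by (simp only: integral_neg)
  also have "\<dots> \<le> integral {-R..R} (\<lambda>x. (u T x)^2 + edens T x)"
  proof (rule integral_le)
    show "- (2 * u T x * ut T x + a x * (u T x)^2) \<le> (u T x)^2 + edens T x" for x
      using zero_le_power2[of "u T x + ut T x"] mult_nonneg_nonneg[OF a_nonneg[of x] zero_le_power2[of "u T x"]]
        energy_density_ge(1)[of "ut T x" x "u T x" "ux T x"]
      unfolding edens_def by (simp add: power2_eq_square algebra_simps)
  qed (use T_nonneg in \<open>auto intro!: integrable_continuous_real continuous_intros\<close>)
  also have "\<dots> = l2sq (u T) + energy T"
    unfolding l2sq_def energy_def using T_nonneg
    by (subst integral_add) (auto intro!: integrable_continuous_real continuous_intros)
  finally show ?thesis .
qed

lemma abs_morawetz_term_le: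
  assumes t: "0 \<le> t"
  shows "\<bar>morawetz_term t\<bar> \<le> \<mu>_sup * energy t"
proof -
  have "\<bar>2 * \<mu> x * ut t x * ux t x\<bar> \<le> \<mu>_sup * edens t x" for x
  proof -
    have "2 * \<bar>ut t x\<bar> * \<bar>ux t x\<bar> \<le> (ut t x)^2 + (ux t x)^2"
      using zero_le_power2[of "\<bar>ut t x\<bar> - \<bar>ux t x\<bar>"] by (simp add: power2_eq_square algebra_simps)
    also have "\<dots> \<le> edens t x"
      unfolding edens_def energy_density_def using V_pos[of x] by simp
    finally have "\<bar>\<mu> x\<bar> * (2 * \<bar>ut t x\<bar> * \<bar>ux t x\<bar>) \<le> \<mu>_sup * edens t x"
      using abs_\<mu>_le[of x] by (intro mult_mono) (simp_all add: edens_def energy_density_nonneg)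
    then show ?thesis by (simp add: abs_mult)
  qed
  moreover have "(\<lambda>x. 2 * \<mu> x * ut t x * ux t x) integrable_on {-R..R}"
    "(\<lambda>x. \<mu>_sup * edens t x) integrable_on {-R..R}"
    using t by (auto intro!: integrable_continuous_real continuous_intros)
  ultimately have "norm (morawetz_term t) \<le> integral {-R..R} (\<lambda>x. \<mu>_sup * edens t x)"
    unfolding morawetz_term_def by (intro integral_norm_bound_integral) auto
  then show ?thesis unfolding energy_def by simp
qed

lemma primitive_bound: "l2sq (u T) + 2 * st_integral (\<lambda>s x. a x * (u s x)^2) \<le> I0"
proof -
  define f where "f x = u1 x + a x * u0 x" for x
  have "integral {-R..R} (\<lambda>x. (u T x)^2 - (f x / sqrt (V x))^2)
      \<le> integral {-R..R} (\<lambda>x. (u T x)^2 + (Wx T x)^2 + V x * (W T x)^2 - 2 * f x * W T x)"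
  proof (rule integral_le)
    fix x
    have "(f x / sqrt (V x))^2 = (f x)^2 / V x" using V_pos[of x] by (simp add: power_divide)
    moreover have "0 \<le> (V x * W T x - f x)^2 / V x" using V_pos[of x] by simp
    moreover have "(V x * W T x - f x)^2 / V x = V x * (W T x)^2 - 2 * f x * W T x + (f x)^2 / V x"
      using V_pos[of x] by (simp add: power2_eq_square field_simps)
    ultimately show "(u T x)^2 - (f x / sqrt (V x))^2
        \<le> (u T x)^2 + (Wx T x)^2 + V x * (W T x)^2 - 2 * f x * W T x"
      using zero_le_power2[of "Wx T x"] by linarith
  qed (use T_nonneg in \<open>auto intro!: integrable_continuous_real continuous_intros simp: f_def\<close>)
  also have "integral {-R..R} (\<lambda>x. (u T x)^2 - (f x / sqrt (V x))^2)
      = l2sq (u T) - l2sq (\<lambda>x. (u1 x + a x * u0 x) / sqrt (V x))"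
    unfolding l2sq_def f_def using T_nonneg
    by (intro integral_diff integrable_continuous_real) (auto intro!: continuous_intros)
  finally show ?thesis
    using primitive_energy_identity l2sq_data_nonneg unfolding f_def I0sq_eq l2sq_def by linarith
qed

lemma cutoff_l2_le:
  assumes s: "0 \<le> s"
  shows "integral {-R..R} (\<lambda>x. cutoff x * (u s x)^2)
     \<le> poincare_const L * integral {-R..R} (\<lambda>x. (ux s x)^2)
       + (4 * (L + 1) / \<epsilon>1) * integral {-R..R} (\<lambda>x. a x * (u s x)^2)"
proof -
  have "integral {L+1..L+2} (\<lambda>x. (u s x)^2) \<le> integral {L+1..L+2} (\<lambda>x. (1 / \<epsilon>1) * (a x * (u s x)^2))"
  proof (rule integral_le)
    fix x assume "x \<in> {L+1..L+2}"
    then have "1 \<le> a x / \<epsilon>1" using a_ge_eps[of x] L_pos eps_pos by simp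
    then show "(u s x)^2 \<le> (1 / \<epsilon>1) * (a x * (u s x)^2)"
      using mult_left_mono[of 1 "a x / \<epsilon>1" "(u s x)^2"] eps_pos by (simp add: ac_simps)
  qed (use s eps_pos in \<open>auto intro!: integrable_continuous_real continuous_intros\<close>)
  also have "\<dots> \<le> integral {-R..R} (\<lambda>x. (1 / \<epsilon>1) * (a x * (u s x)^2))"
    using R_gt L_pos s eps_pos a_nonneg
    by (intro integral_subset_le integrable_continuous_real) (auto intro!: continuous_intros)
  also have "\<dots> = (1 / \<epsilon>1) * integral {-R..R} (\<lambda>x. a x * (u s x)^2)" by simp
  finally have "4 * (L + 1) * integral {L+1..L+2} (\<lambda>x. (u s x)^2)
      \<le> 4 * (L + 1) * ((1 / \<epsilon>1) * integral {-R..R} (\<lambda>x. a x * (u s x)^2))"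
    using L_pos by (intro mult_left_mono) auto
  moreover have "integral {-R..R} (\<lambda>x. cutoff x * (u s x)^2)
      \<le> poincare_const L * integral {-R..R} (\<lambda>x. (ux s x)^2) + 4 * (L + 1) * integral {L+1..L+2} (\<lambda>x. (u s x)^2)"
    using R_gt L_pos deriv_x_u[OF s] s
    by (intro weighted_poincare) (auto intro!: continuous_intros simp: cutoff_nonneg cutoff_le_1 cutoff_eq_0)
  ultimately show ?thesis by simp
qed

lemma st_integral_cutoff_le:
  "st_integral (\<lambda>s x. cutoff x * (u s x)^2)
     \<le> poincare_const L * st_integral (\<lambda>s x. (ux s x)^2) + (4 * (L + 1) / \<epsilon>1) * st_integral (\<lambda>s x. a x * (u s x)^2)"
proof -
  define k where "k = 4 * (L + 1) / \<epsilon>1"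
  have "integral {-R..R} (\<lambda>x. cutoff x * (u s x)^2)
      \<le> integral {-R..R} (\<lambda>x. poincare_const L * (ux s x)^2 + k * (a x * (u s x)^2))"
    if "s \<in> {0..T}" for s
    using cutoff_l2_le[of s, folded k_def] that
    by (subst integral_add) (auto intro!: integrable_continuous_real continuous_intros)
  then have "st_integral (\<lambda>s x. cutoff x * (u s x)^2)
      \<le> st_integral (\<lambda>s x. poincare_const L * (ux s x)^2 + k * (a x * (u s x)^2))"
    unfolding st_integral_def
    by (rule integral_le[rotated 2]) (auto intro!: st_integrable(1) continuous_intros)
  also have "\<dots> = poincare_const L * st_integral (\<lambda>s x. (ux s x)^2) + k * st_integral (\<lambda>s x. a x * (u s x)^2)"
    by (subst st_integral_add) (auto intro!: continuous_intros simp: st_integral_cmult)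
  finally show ?thesis unfolding k_def .
qed

section \<open>Decay of the energy\<close>

lemma st_integral_edens_le:
  "st_integral edens \<le> - (1/2) * (equipartition_term T - equipartition_term 0) - 4 * (morawetz_term T - morawetz_term 0)
     + 4 * V 0 * st_integral (\<lambda>s x. cutoff x * (u s x)^2) + c_u * st_integral (\<lambda>s x. a x * (u s x)^2)
     + 4 * slack * st_integral (\<lambda>s x. (ux s x)^2) + c_ut * st_integral (\<lambda>s x. a x * (ut s x)^2)"
proof -
  let ?EQ = "\<lambda>s x. equipartition_density x (u s x) (ut s x) (ux s x)"
  let ?MO = "\<lambda>s x. morawetz_density x (u s x) (ut s x) (ux s x)"
  have cont: "st_continuous ?EQ" "st_continuous ?MO"
    unfolding equipartition_density_def morawetz_density_def by (auto intro!: continuous_intros)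
  have "st_integral edens \<le> st_integral (\<lambda>s x. (-(1/2)) * ?EQ s x + (-4) * ?MO s x + (4 * V 0) * (cutoff x * (u s x)^2)
      + c_u * (a x * (u s x)^2) + (4 * slack) * (ux s x)^2 + c_ut * (a x * (ut s x)^2))"
  proof (rule st_integral_mono)
    show "edens s x \<le> (-(1/2)) * ?EQ s x + (-4) * ?MO s x + (4 * V 0) * (cutoff x * (u s x)^2)
      + c_u * (a x * (u s x)^2) + (4 * slack) * (ux s x)^2 + c_ut * (a x * (ut s x)^2)" for s x
      using energy_density_le[of x "u s x" "ut s x" "ux s x"] unfolding edens_def
      by (simp add: algebra_simps)
  qed (use cont in \<open>auto intro!: continuous_intros\<close>)
  also have "\<dots> = - (1/2) * st_integral ?EQ - 4 * st_integral ?MO + 4 * V 0 * st_integral (\<lambda>s x. cutoff x * (u s x)^2)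
      + c_u * st_integral (\<lambda>s x. a x * (u s x)^2) + 4 * slack * st_integral (\<lambda>s x. (ux s x)^2)
      + c_ut * st_integral (\<lambda>s x. a x * (ut s x)^2)"
    using cont by (subst st_integral_lincomb6) (auto intro!: continuous_intros)
  finally show ?thesis
    unfolding st_integral_equipartition_density st_integral_morawetz_density .
qed

lemma st_integral_edens_absorbed:
  "(1 - absorbed) * st_integral edens \<le> (1/2) * (equipartition_term 0 - equipartition_term T)
     + 4 * (morawetz_term 0 - morawetz_term T)
     + c_au * st_integral (\<lambda>s x. a x * (u s x)^2) + c_ut * st_integral (\<lambda>s x. a x * (ut s x)^2)"
proof -
  define X Q AU AT where "X = st_integral edens" and "Q = st_integral (\<lambda>s x. (ux s x)^2)"
    and "AU = st_integral (\<lambda>s x. a x * (u s x)^2)" and "AT = st_integral (\<lambda>s x. a x * (ut s x)^2)"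
  define EQ MO where "EQ = equipartition_term 0 - equipartition_term T"
    and "MO = morawetz_term 0 - morawetz_term T"
  define k where "k = 4 * (L + 1) / \<epsilon>1"
  have main: "X \<le> (1/2) * EQ + 4 * MO + 4 * V 0 * st_integral (\<lambda>s x. cutoff x * (u s x)^2)
      + c_u * AU + 4 * slack * Q + c_ut * AT"
    using st_integral_edens_le unfolding X_def Q_def AU_def AT_def EQ_def MO_def by argo
  have "4 * V 0 * st_integral (\<lambda>s x. cutoff x * (u s x)^2) \<le> 4 * V 0 * (poincare_const L * Q + k * AU)"
    using st_integral_cutoff_le V_pos[of 0] unfolding Q_def AU_def k_def by (intro mult_left_mono) auto
  moreover have "Q \<le> X"
    unfolding Q_def X_def
  proof (rule st_integral_mono)
    show "(ux s x)^2 \<le> edens s x" for s x unfolding edens_def by (rule energy_density_ge(2))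
  qed (auto intro!: continuous_intros)
  then have "absorbed * Q \<le> absorbed * X" by (rule mult_left_mono[OF _ absorbed_nonneg])
  moreover have "(1/2) * EQ + 4 * MO + c_au * AU + c_ut * AT - (1 - absorbed) * X
      = ((1/2) * EQ + 4 * MO + 4 * V 0 * st_integral (\<lambda>s x. cutoff x * (u s x)^2) + c_u * AU + 4 * slack * Q + c_ut * AT - X)
        + (4 * V 0 * (poincare_const L * Q + k * AU) - 4 * V 0 * st_integral (\<lambda>s x. cutoff x * (u s x)^2))
        + (absorbed * X - absorbed * Q)"
    unfolding absorbed_def c_au_def k_def by (simp add: algebra_simps)
  ultimately show ?thesis
    using main unfolding X_def AU_def AT_def EQ_def MO_def by argo
qed

lemma st_integral_edens_rhs_le:
  "(1/2) * (equipartition_term 0 - equipartition_term T) + 4 * (morawetz_term 0 - morawetz_term T)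
     + c_au * st_integral (\<lambda>s x. a x * (u s x)^2) + c_ut * st_integral (\<lambda>s x. a x * (ut s x)^2) \<le> c_rhs * I0"
proof -
  define AU AT where "AU = st_integral (\<lambda>s x. a x * (u s x)^2)" and "AT = st_integral (\<lambda>s x. a x * (ut s x)^2)"
  have I0_nonneg: "0 \<le> I0" using l2sq_data_nonneg I0sq_eq by linarith
  have AU_nonneg: "0 \<le> AU"
    unfolding AU_def by (intro st_integral_nonneg) (auto intro!: continuous_intros simp: a_nonneg)
  have E0: "energy 0 \<le> c_init * I0" by (rule energy_0_le)
  have ET: "energy T \<le> energy 0" using energy_antimono[OF order_refl T_nonneg order_refl] .
  have uT: "l2sq (u T) + 2 * AU \<le> I0" using primitive_bound unfolding AU_def .
  have "0 \<le> l2sq (u T)" using T_nonneg by (intro l2sq_nonneg) (auto intro!: continuous_intros)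
  have EQ: "equipartition_term 0 - equipartition_term T \<le> 2 * (c_init * I0) + I0"
    using equipartition_term_0_le equipartition_term_T_ge uT AU_nonneg ET E0 by linarith
  have "morawetz_term 0 - morawetz_term T \<le> \<mu>_sup * energy 0 + \<mu>_sup * energy T"
    using abs_morawetz_term_le[of 0] abs_morawetz_term_le[OF T_nonneg] by simp
  also have "\<dots> \<le> \<mu>_sup * (c_init * I0) + \<mu>_sup * (c_init * I0)"
    using ET E0 constants_nonneg(1) by (intro add_mono mult_left_mono) auto
  finally have MO: "morawetz_term 0 - morawetz_term T \<le> 2 * (\<mu>_sup * (c_init * I0))" by simp
  have "c_au * AU \<le> c_au * (I0 / 2)"
    using uT \<open>0 \<le> l2sq (u T)\<close> constants_nonneg(4) by (intro mult_left_mono) auto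
  then have AU: "c_au * AU \<le> c_au * I0 / 2" by simp
  have "c_ut * AT \<le> c_ut * (c_init * I0 / 2)"
    using st_integral_a_ut_le E0 constants_nonneg(3) unfolding AT_def by (intro mult_left_mono) auto
  then have AT: "c_ut * AT \<le> c_ut * (c_init * I0) / 2" by simp
  have "c_rhs * I0 = c_init * I0 + I0 / 2 + 8 * (\<mu>_sup * (c_init * I0)) + c_au * I0 / 2 + c_ut * (c_init * I0) / 2"
    unfolding c_rhs_def by (simp add: algebra_simps)
  with EQ MO AU AT show ?thesis unfolding AU_def AT_def by argo
qed

lemma energy_decay: "(1 + T) * energy T \<le> c_energy * I0"
proof -
  have "(1 - absorbed) * st_integral edens \<le> c_rhs * I0"
    using st_integral_edens_absorbed st_integral_edens_rhs_le by linarith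
  then have "st_integral edens \<le> c_rhs * I0 / (1 - absorbed)"
    using absorbed_lt_1 by (simp add: pos_le_divide_eq mult.commute)
  moreover have "energy T \<le> c_init * I0"
    using energy_antimono[OF order_refl T_nonneg order_refl] energy_0_le by linarith
  moreover have "c_energy * I0 = c_init * I0 + c_rhs * I0 / (1 - absorbed)"
    unfolding c_energy_def by (simp add: algebra_simps)
  ultimately show ?thesis using st_integral_edens_ge by (simp add: algebra_simps)
qed

lemma local_l2_decay: "(1 + T) * integral {-L..L} (\<lambda>x. (u T x)^2) \<le> decay_const * I0"
proof -
  define m where "m = min (V L) (V (-L))"
  have m_pos: "0 < m" unfolding m_def using V_pos by simp
  have "m * integral {-L..L} (\<lambda>x. (u T x)^2) = integral {-L..L} (\<lambda>x. m * (u T x)^2)" by simp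
  also have "\<dots> \<le> integral {-L..L} (\<lambda>x. V x * (u T x)^2)"
    using V_ge_min_ends T_nonneg unfolding m_def
    by (intro integral_le integrable_continuous_real) (auto intro!: continuous_intros mult_right_mono)
  also have "\<dots> \<le> integral {-R..R} (\<lambda>x. V x * (u T x)^2)"
    using R_gt L_pos T_nonneg
    by (intro integral_subset_le integrable_continuous_real)
      (auto intro!: continuous_intros mult_nonneg_nonneg simp: less_imp_le[OF V_pos])
  also have "\<dots> \<le> energy T"
    unfolding energy_def
  proof (rule integral_le)
    show "edens T integrable_on {-R..R}" using T_nonneg by (rule integrable_edens)
    show "V x * (u T x)^2 \<le> edens T x" for x unfolding edens_def by (rule energy_density_ge(3))
  qed (use T_nonneg in \<open>auto intro!: integrable_continuous_real continuous_intros\<close>)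
  finally have "(1 + T) * (m * integral {-L..L} (\<lambda>x. (u T x)^2)) \<le> (1 + T) * energy T"
    using T_nonneg by (intro mult_left_mono) auto
  also have "\<dots> \<le> c_energy * I0" by (rule energy_decay)
  finally show ?thesis
    using m_pos unfolding decay_const_def m_def[symmetric] by (simp add: pos_le_divide_eq ac_simps)
qed

end

lemma C0_inf_support_bound:
  assumes "C0_inf f"
  obtains r where "0 \<le> r" "\<And>x. r < \<bar>x\<bar> \<Longrightarrow> f x = 0"
proof -
  obtain r where "\<And>x. f x \<noteq> 0 \<Longrightarrow> \<bar>x\<bar> \<le> r"
    using assms unfolding C0_inf_def bounded_real by blast
  then show ?thesis using that[of "max 0 r"] by force
qed

lemma (in damped_wave_coeffs) local_energy_decay:
  assumes u0: "C0_inf u0" and u1: "C0_inf u1" and u: "is_solution a V u0 u1 u" and t: "0 \<le> t"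
  shows "(1 + t) * (LBINT x:{-L..L}. (u t x)^2) \<le> decay_const * I0sq a V u0 u1"
proof -
  obtain r0 r1 where r0: "\<And>x. r0 < \<bar>x\<bar> \<Longrightarrow> u0 x = 0" and r1: "\<And>x. r1 < \<bar>x\<bar> \<Longrightarrow> u1 x = 0"
    and "0 \<le> r0" by (metis C0_inf_support_bound u0 u1)
  have "0 \<le> max r0 r1" "\<forall>x. max r0 r1 < \<bar>x\<bar> \<longrightarrow> u0 x = 0 \<and> u1 x = 0"
    using r0 r1 \<open>0 \<le> r0\<close> by auto
  then have "\<exists>ut ux utt utx uxx. damped_wave_axioms a V u0 u1 u ut ux utt utx uxx (max r0 r1)"
    using u unfolding is_solution_def damped_wave_axioms_def by blast
  then obtain ut ux utt utx uxx where "damped_wave_axioms a V u0 u1 u ut ux utt utx uxx (max r0 r1)"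
    by blast
  then interpret damped_wave_horizon a V A Vmax L \<epsilon>1 u0 u1 u ut ux utt utx uxx "max r0 r1" t
    using damped_wave_coeffs_axioms t
    by (intro damped_wave_horizon.intro damped_wave.intro damped_wave_horizon_axioms.intro)
  have "(LBINT x:{-L..L}. (u t x)^2) = integral {-L..L} (\<lambda>x. (u t x)^2)"
    using t by (intro set_integral_Icc_eq_integral) (auto intro!: continuous_intros)
  then show ?thesis using local_l2_decay by simp
qed

lemma local_energy_decay_BC:
  assumes L: "0 < L" and a: "BC a" "\<forall>x. 0 \<le> a x" "0 < \<epsilon>1" "\<forall>x. L \<le> \<bar>x\<bar> \<longrightarrow> \<epsilon>1 \<le> a x"
    and V: "BC1 V" "\<forall>x. 0 < V x" "\<forall>x. deriv V x * x \<le> 0" "V 0 < 1 / (4 * poincare_const L)"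
  shows "\<exists>C>0. \<forall>u0 u1 u. C0_inf u0 \<and> C0_inf u1 \<and> is_solution a V u0 u1 u \<longrightarrow>
           (\<forall>t\<ge>0. (1 + t) * (LBINT x:{-L..L}. (u t x)^2) \<le> C * I0sq a V u0 u1)"
proof -
  obtain A where "\<And>x. a x \<le> A"
    using a(1) unfolding BC_def bounded_real by (metis abs_le_D1 rangeI)
  moreover obtain Vmax where "\<And>x. V x \<le> Vmax"
    using V(1) unfolding BC1_def BC_def bounded_real by (metis abs_le_D1 rangeI)
  moreover have "4 * V 0 * poincare_const L < 1"
    using V(4) poincare_const_pos[OF L] by (simp add: field_simps)
  ultimately interpret damped_wave_coeffs a V A Vmax L \<epsilon>1
    using L a V by unfold_locales (auto simp: BC_def BC1_def DERIV_deriv_iff_real_differentiable)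
  show ?thesis using decay_const_pos local_energy_decay by blast
qed

theorem proposition2p3:
  "\<forall>L::real. L > 0 \<longrightarrow> (\<exists>Cstar::real. Cstar > 0 \<and>
     (\<forall>(a::real \<Rightarrow> real) (V::real \<Rightarrow> real) (\<epsilon>1::real).
        BC a \<and> (\<forall>x. a x \<ge> 0) \<and> \<epsilon>1 > 0 \<and> (\<forall>x. \<bar>x\<bar> \<ge> L \<longrightarrow> a x \<ge> \<epsilon>1) \<and>
        BC1 V \<and> (\<forall>x. V x > 0) \<and> (\<forall>x. deriv V x * x \<le> 0) \<and>
        V 0 < 1 / (4 * Cstar) \<longrightarrow>
        (\<exists>C::real. C > 0 \<and>
           (\<forall>u0 u1 (u::real \<Rightarrow> real \<Rightarrow> real).
              C0_inf u0 \<and> C0_inf u1 \<and> is_solution a V u0 u1 u \<longrightarrow>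
              (\<forall>t\<ge>0. (1 + t) * (LBINT x:{-L..L}. (u t x)\<^sup>2) \<le> C * I0sq a V u0 u1)))))"
  apply (intro allI impI)
  subgoal for L
    by (rule exI[of _ "poincare_const L"])
      (use local_energy_decay_BC[of L] poincare_const_pos[of L] in auto)
  done

end
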